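(* Let $X$ be a uniformly locally finite metric space with infinitely many points. Then there exists a flow on $\mathrm{C}^*_u(X)$ which is not coarse.
   Context: Uniformly locally finite: $\sup_x|B_r(x)|<\infty$ for all $r>0$. A partial translation is a bijection $f\colon\mathrm{dom}(f)\subseteq X\to\mathrm{ran}(f)\subseteq X$ with $\sup_{x\in\mathrm{dom}(f)}d(x,f(x))<\infty$; $v_f\delta_x=\delta_{f(x)}$ for $x\in\mathrm{dom}(f)$, $0$ otherwise; $\mathrm{C}^*_u(X)$ is the $\mathrm{C}^*$-subalgebra of $\mathcal{B}(\ell_2(X))$ generated by all $v_f$. A flow on $\mathrm{C}^*_u(X)$ is a group homomorphism $\sigma\colon\mathbb{R}\to\mathrm{Aut}(\mathrm{C}^*_u(X))$ with $t\mapsto\sigma_t(a)$ norm continuous for each $a$; it is coarse if $t\mapsto\sigma_t(v_f)$ is norm differentiable for every partial translation $f$. *)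

theory Defs
  imports "HOL-Analysis.Analysis"
begin

definition ell2 :: "('a \<Rightarrow> complex) set" where
  "ell2 = {g. (\<lambda>x. (cmod (g x))\<^sup>2) summable_on UNIV}"

definition l2norm :: "('a \<Rightarrow> complex) \<Rightarrow> real" where
  "l2norm g = sqrt (infsum (\<lambda>x. (cmod (g x))\<^sup>2) UNIV)"

definition l2inner :: "('a \<Rightarrow> complex) \<Rightarrow> ('a \<Rightarrow> complex) \<Rightarrow> complex" where
  "l2inner g h = infsum (\<lambda>x. cnj (g x) * h x) UNIV"

text \<open>An operator is a map on functions; we normalise it to be 0 outside ell2,
  so that bounded operators on ell2(X) correspond bijectively to such maps.\<close>
type_synonym 'a op = "('a \<Rightarrow> complex) \<Rightarrow> ('a \<Rightarrow> complex)"

definition bounded_op :: "'a op \<Rightarrow> bool" where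
  "bounded_op T \<longleftrightarrow>
     (\<forall>g\<in>ell2. T g \<in> ell2) \<and>
     (\<forall>g\<in>ell2. \<forall>h\<in>ell2. \<forall>c::complex. T (\<lambda>x. g x + c * h x) = (\<lambda>x. T g x + c * T h x)) \<and>
     (\<exists>K. \<forall>g\<in>ell2. l2norm (T g) \<le> K * l2norm g) \<and>
     (\<forall>g. g \<notin> ell2 \<longrightarrow> T g = (\<lambda>_. 0))"

definition op_norm :: "'a op \<Rightarrow> real" where
  "op_norm T = Sup {l2norm (T g) | g. g \<in> ell2 \<and> l2norm g \<le> 1}"

definition op_zero :: "'a op" where "op_zero = (\<lambda>g x. 0)"
definition op_add :: "'a op \<Rightarrow> 'a op \<Rightarrow> 'a op" where "op_add S T = (\<lambda>g x. S g x + T g x)"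
definition op_diff :: "'a op \<Rightarrow> 'a op \<Rightarrow> 'a op" where "op_diff S T = (\<lambda>g x. S g x - T g x)"
definition op_scale :: "complex \<Rightarrow> 'a op \<Rightarrow> 'a op" where "op_scale c T = (\<lambda>g x. c * T g x)"
definition op_mult :: "'a op \<Rightarrow> 'a op \<Rightarrow> 'a op" where "op_mult S T = (\<lambda>g. S (T g))"

definition is_adjoint :: "'a op \<Rightarrow> 'a op \<Rightarrow> bool" where
  "is_adjoint T S \<longleftrightarrow> (\<forall>g\<in>ell2. \<forall>h\<in>ell2. l2inner (T g) h = l2inner g (S h))"

definition cstar_subalg :: "'a op set \<Rightarrow> bool" where
  "cstar_subalg A \<longleftrightarrow>
     A \<subseteq> {T. bounded_op T} \<and> op_zero \<in> A \<and>
     (\<forall>S\<in>A. \<forall>T\<in>A. op_add S T \<in> A) \<and>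
     (\<forall>c. \<forall>T\<in>A. op_scale c T \<in> A) \<and>
     (\<forall>S\<in>A. \<forall>T\<in>A. op_mult S T \<in> A) \<and>
     (\<forall>T\<in>A. \<exists>S\<in>A. is_adjoint T S) \<and>
     (\<forall>T s. bounded_op T \<and> (\<forall>n. s n \<in> A) \<and>
            (\<lambda>n. op_norm (op_diff (s n) T)) \<longlonglongrightarrow> 0 \<longrightarrow> T \<in> A)"

definition partial_translation :: "'a::metric_space set \<Rightarrow> ('a \<Rightarrow> 'a) \<Rightarrow> bool" where
  "partial_translation D f \<longleftrightarrow> inj_on f D \<and> (\<exists>R. \<forall>x\<in>D. dist x (f x) \<le> R)"

text \<open>v_f: the bounded operator with v_f delta_x = delta_(f x) for x in D, 0 otherwise.\<close>
definition pt_op :: "'a set \<Rightarrow> ('a \<Rightarrow> 'a) \<Rightarrow> 'a op" where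
  "pt_op D f = (\<lambda>g. if g \<in> ell2 then (\<lambda>y. if y \<in> f ` D then g (inv_into D f y) else 0)
                   else (\<lambda>_. 0))"

definition uniform_roe :: "'a::metric_space op set" where
  "uniform_roe = \<Inter>{A. cstar_subalg A \<and>
                       {pt_op D f | D f. partial_translation D f} \<subseteq> A}"

definition star_automorphism :: "'a op set \<Rightarrow> ('a op \<Rightarrow> 'a op) \<Rightarrow> bool" where
  "star_automorphism A \<phi> \<longleftrightarrow>
     bij_betw \<phi> A A \<and>
     (\<forall>S\<in>A. \<forall>T\<in>A. \<phi> (op_add S T) = op_add (\<phi> S) (\<phi> T)) \<and>
     (\<forall>c. \<forall>T\<in>A. \<phi> (op_scale c T) = op_scale c (\<phi> T)) \<and>
     (\<forall>S\<in>A. \<forall>T\<in>A. \<phi> (op_mult S T) = op_mult (\<phi> S) (\<phi> T)) \<and>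
     (\<forall>S\<in>A. \<forall>T\<in>A. is_adjoint T S \<longrightarrow> is_adjoint (\<phi> T) (\<phi> S))"

definition is_flow :: "'a op set \<Rightarrow> (real \<Rightarrow> 'a op \<Rightarrow> 'a op) \<Rightarrow> bool" where
  "is_flow A \<sigma> \<longleftrightarrow>
     (\<forall>t. star_automorphism A (\<sigma> t)) \<and>
     (\<forall>T\<in>A. \<sigma> 0 T = T) \<and>
     (\<forall>s t. \<forall>T\<in>A. \<sigma> (s + t) T = \<sigma> s (\<sigma> t T)) \<and>
     (\<forall>T\<in>A. \<forall>t0. ((\<lambda>t. op_norm (op_diff (\<sigma> t T) (\<sigma> t0 T))) \<longlongrightarrow> 0) (at t0))"

definition norm_differentiable_at :: "(real \<Rightarrow> 'a op) \<Rightarrow> real \<Rightarrow> bool" where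
  "norm_differentiable_at u t0 \<longleftrightarrow>
     (\<exists>D. bounded_op D \<and>
        ((\<lambda>h. op_norm (op_diff (op_scale (complex_of_real (1 / h)) (op_diff (u (t0 + h)) (u t0))) D))
           \<longlongrightarrow> 0) (at 0))"

definition coarse_flow :: "'a::metric_space op set \<Rightarrow> (real \<Rightarrow> 'a op \<Rightarrow> 'a op) \<Rightarrow> bool" where
  "coarse_flow A \<sigma> \<longleftrightarrow> is_flow A \<sigma> \<and>
     (\<forall>D f. partial_translation D f \<longrightarrow>
        (\<forall>t. norm_differentiable_at (\<lambda>t. \<sigma> t (pt_op D f)) t))"

definition uniformly_locally_finite :: "'a::metric_space itself \<Rightarrow> bool" where
  "uniformly_locally_finite _ \<longleftrightarrow>
     (\<forall>r>0. \<exists>N::nat. \<forall>x::'a. finite (cball x r) \<and> card (cball x r) \<le> N)"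

end

theory Submission
  imports Defs
begin

text \<open>
  Fix \<open>x0\<close> and the coarse height \<open>h = \<lfloor>dist _ x0\<rfloor>\<close>. Conjugation by the unitaries
  \<open>e^(i t h)\<close> is a flow on \<open>C*_u(X)\<close>: it sends a partial translation \<open>v_f\<close> to the finite
  sum of \<open>e^(i t k) v_f\<close> over the level sets of \<open>h o f - h\<close>. Balls are finite and \<open>X\<close> is
  infinite, so there are points \<open>p k\<close> with \<open>dist (p k) x0 > 4^k\<close>. The reflection \<open>W\<close> along
  \<open>\<xi> = \<Sum>\<^sub>k 2^-k \<delta>\<^sub>p\<^sub>k\<close> lies in \<open>C*_u(X)\<close>, being the identity minus a norm limit of finite
  matrices, so conjugating the flow by \<open>W\<close> gives again a flow \<open>\<sigma>\<close>. If \<open>\<sigma>\<close> were coarse, then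
  \<open>e^(i t h) E e^(-i t h)\<close> with \<open>E = W v W\<close>, \<open>v\<close> the projection onto \<open>\<delta>\<^sub>x\<^sub>0\<close>, would be norm
  differentiable, and the matrix entries \<open>(h y - h z) E_yz\<close> of its derivative would be
  bounded. But \<open>|E_yz| = |(W \<delta>\<^sub>x\<^sub>0)(y)| |(W \<delta>\<^sub>x\<^sub>0)(z)|\<close> and \<open>|(W \<delta>\<^sub>x\<^sub>0)(p k)| = 3/2 2^-k\<close>,
  while \<open>h (p k) \<ge> 4^k\<close>.
\<close>

section \<open>Square-summable functions\<close>

definition sq_l2norm :: "('a \<Rightarrow> complex) \<Rightarrow> real" where
  "sq_l2norm g = infsum (\<lambda>x. (cmod (g x))\<^sup>2) UNIV"

lemma l2norm_eq_sqrt: "l2norm g = sqrt (sq_l2norm g)"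
  by (simp add: l2norm_def sq_l2norm_def)

lemma sq_l2norm_nonneg: "0 \<le> sq_l2norm g"
  unfolding sq_l2norm_def by (rule infsum_nonneg) simp

lemma l2norm_nonneg: "0 \<le> l2norm g"
  by (simp add: l2norm_eq_sqrt sq_l2norm_nonneg)

lemma l2norm_power2: "(l2norm g)\<^sup>2 = sq_l2norm g"
  by (simp add: l2norm_eq_sqrt sq_l2norm_nonneg)

lemma sum_le_sq_l2norm:
  assumes "g \<in> ell2" "finite F"
  shows "(\<Sum>x\<in>F. (cmod (g x))\<^sup>2) \<le> sq_l2norm g"
  unfolding sq_l2norm_def
  by (rule finite_sum_le_infsum) (use assms in \<open>auto simp: ell2_def\<close>)

lemma ell2I_sq_l2norm_le:
  assumes "\<And>F. finite F \<Longrightarrow> (\<Sum>x\<in>F. (cmod (g x))\<^sup>2) \<le> B"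
  shows "g \<in> ell2 \<and> sq_l2norm g \<le> B"
proof -
  have bdd: "bdd_above (sum (\<lambda>x. (cmod (g x))\<^sup>2) ` {F. F \<subseteq> UNIV \<and> finite F})"
    using assms by (auto intro!: bdd_aboveI2)
  have s: "(\<lambda>x. (cmod (g x))\<^sup>2) summable_on UNIV"
    by (rule nonneg_bdd_above_summable_on) (use bdd in auto)
  have "sq_l2norm g = (SUP F\<in>{F. finite F \<and> F\<subseteq>UNIV}. sum (\<lambda>x. (cmod (g x))\<^sup>2) F)"
    unfolding sq_l2norm_def by (rule nonneg_bdd_above_infsum) (use bdd in auto)
  also have "\<dots> \<le> B"
    by (rule cSUP_least) (use assms in auto)
  finally show ?thesis using s by (simp add: ell2_def)
qed

lemma ell2I_l2norm_le:
  assumes "\<And>F. finite F \<Longrightarrow> sqrt (\<Sum>x\<in>F. (cmod (g x))\<^sup>2) \<le> B"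
  shows "g \<in> ell2 \<and> l2norm g \<le> B"
proof -
  have B: "0 \<le> B" using assms[of "{}"] by simp
  have "\<And>F. finite F \<Longrightarrow> (\<Sum>x\<in>F. (cmod (g x))\<^sup>2) \<le> B\<^sup>2"
    using assms by (metis real_le_rsqrt sum_nonneg zero_le_power2 real_sqrt_le_iff real_sqrt_pow2
        power2_le_iff_abs_le B sqrt_le_D)
  from ell2I_sq_l2norm_le[of g, OF this] have "g \<in> ell2 \<and> sq_l2norm g \<le> B\<^sup>2" by blast
  then show ?thesis using B by (simp add: l2norm_eq_sqrt real_sqrt_le_iff real_le_lsqrt sq_l2norm_nonneg)
qed

lemma sqrt_sum_le_l2norm:
  assumes "g \<in> ell2" "finite F"
  shows "sqrt (\<Sum>x\<in>F. (cmod (g x))\<^sup>2) \<le> l2norm g"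
  using sum_le_sq_l2norm[OF assms] by (simp add: l2norm_eq_sqrt)

lemma ell2_lincomb:
  assumes "g \<in> ell2" "h \<in> ell2"
  shows "(\<lambda>x. a * g x + b * h x) \<in> ell2 \<and>
         l2norm (\<lambda>x. a * g x + b * h x) \<le> cmod a * l2norm g + cmod b * l2norm h"
proof (rule ell2I_l2norm_le)
  fix F :: "'a set" assume F: "finite F"
  have "sqrt (\<Sum>x\<in>F. (cmod (a * g x + b * h x))\<^sup>2) = L2_set (\<lambda>x. cmod (a * g x + b * h x)) F"
    by (simp add: L2_set_def)
  also have "\<dots> \<le> L2_set (\<lambda>x. cmod a * cmod (g x) + cmod b * cmod (h x)) F"
    by (rule L2_set_mono) (auto intro: order_trans[OF norm_triangle_ineq] simp: norm_mult)
  also have "\<dots> \<le> L2_set (\<lambda>x. cmod a * cmod (g x)) F + L2_set (\<lambda>x. cmod b * cmod (h x)) F"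
    by (rule L2_set_triangle_ineq)
  also have "\<dots> = cmod a * L2_set (\<lambda>x. cmod (g x)) F + cmod b * L2_set (\<lambda>x. cmod (h x)) F"
    by (simp add: L2_set_right_distrib)
  also have "\<dots> \<le> cmod a * l2norm g + cmod b * l2norm h"
    using sqrt_sum_le_l2norm[OF assms(1) F] sqrt_sum_le_l2norm[OF assms(2) F]
    by (intro add_mono mult_left_mono) (auto simp: L2_set_def)
  finally show "sqrt (\<Sum>x\<in>F. (cmod (a * g x + b * h x))\<^sup>2) \<le> cmod a * l2norm g + cmod b * l2norm h" .
qed

lemma ell2_zero[simp]: "(\<lambda>x. 0) \<in> ell2"
  by (simp add: ell2_def)

lemma l2norm_zero[simp]: "l2norm (\<lambda>x. 0) = 0"
  by (simp add: l2norm_def)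

lemma ell2_add:
  "g \<in> ell2 \<Longrightarrow> h \<in> ell2 \<Longrightarrow> (\<lambda>x. g x + h x) \<in> ell2"
  using ell2_lincomb[of g h 1 1] by simp

lemma ell2_diff:
  "g \<in> ell2 \<Longrightarrow> h \<in> ell2 \<Longrightarrow> (\<lambda>x. g x - h x) \<in> ell2"
  using ell2_lincomb[of g h 1 "-1"] by simp

lemma ell2_scale: "g \<in> ell2 \<Longrightarrow> (\<lambda>x. c * g x) \<in> ell2"
  using ell2_lincomb[of g g c 0] by simp

lemma ell2_add_scaled:
  "g \<in> ell2 \<Longrightarrow> h \<in> ell2 \<Longrightarrow>
    (\<lambda>x. g x + c * h x) \<in> ell2"
  using ell2_lincomb[of g h 1 c] by simp

lemma l2norm_add:
  "g \<in> ell2 \<Longrightarrow> h \<in> ell2 \<Longrightarrow>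
    l2norm (\<lambda>x. g x + h x) \<le> l2norm g + l2norm h"
  using ell2_lincomb[of g h 1 1] by simp

lemma l2norm_diff:
  "g \<in> ell2 \<Longrightarrow> h \<in> ell2 \<Longrightarrow>
    l2norm (\<lambda>x. g x - h x) \<le> l2norm g + l2norm h"
  using ell2_lincomb[of g h 1 "-1"] by simp

lemma sq_l2norm_scale: "sq_l2norm (\<lambda>x. c * g x) = (cmod c)\<^sup>2 * sq_l2norm g"
  unfolding sq_l2norm_def by (simp add: norm_mult power_mult_distrib infsum_cmult_right')

lemma l2norm_scale: "l2norm (\<lambda>x. c * g x) = cmod c * l2norm g"
  by (simp add: l2norm_eq_sqrt sq_l2norm_scale real_sqrt_mult)

lemma l2norm_minus_sym: "l2norm (\<lambda>x. g x - h x) = l2norm (\<lambda>x. h x - g x)"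
  unfolding l2norm_def by (simp add: norm_minus_commute)

lemma has_sum_sq_l2norm:
  "g \<in> ell2 \<Longrightarrow> ((\<lambda>x. (cmod (g x))\<^sup>2) has_sum sq_l2norm g) UNIV"
  by (simp add: ell2_def sq_l2norm_def)

lemma sq_l2norm_eq_0: assumes "g \<in> ell2" "sq_l2norm g = 0" shows "g = (\<lambda>x. 0)"
proof
  fix x
  have "(\<Sum>y\<in>{x}. (cmod (g y))\<^sup>2) \<le> 0" using sum_le_sq_l2norm[OF assms(1), of "{x}"] assms(2) by simp
  then show "g x = 0" by simp
qed

lemma l2norm_eq_0:
  "g \<in> ell2 \<Longrightarrow> l2norm g = 0 \<Longrightarrow> g = (\<lambda>x. 0)"
  using sq_l2norm_eq_0 by (simp add: l2norm_eq_sqrt)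

lemma norm_le_l2norm: "g \<in> ell2 \<Longrightarrow> cmod (g x) \<le> l2norm g"
  using sqrt_sum_le_l2norm[of g "{x}"] by simp

lemma l2inner_abs_summable:
  assumes "g \<in> ell2" "h \<in> ell2"
  shows "(\<lambda>x. norm (cnj (g x) * h x)) summable_on UNIV"
proof -
  define F where "F = (\<lambda>x. ((cmod (g x))\<^sup>2 + (cmod (h x))\<^sup>2) * (1/2::real))"
  have s: "F summable_on UNIV"
    using assms unfolding ell2_def F_def
    by (intro summable_on_cmult_left summable_on_add) auto
  have e: "(\<lambda>x. norm (F x)) = F"
    by (rule ext) (simp add: F_def)
  have "(\<lambda>x. norm (F x)) summable_on UNIV"
    using s e by simp
  then show ?thesis
  proof (rule Infinite_Sum.abs_summable_on_comparison_test)
    fix x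
    have "2 * cmod (g x) * cmod (h x) \<le> (cmod (g x))\<^sup>2 + (cmod (h x))\<^sup>2"
      by (rule sum_squares_bound)
    then have "cmod (g x) * cmod (h x) \<le> F x" unfolding F_def by (simp add: field_simps)
    moreover have "norm (cnj (g x) * h x) = cmod (g x) * cmod (h x)" by (simp add: norm_mult)
    moreover have "norm (F x) = F x" unfolding F_def by simp
    ultimately show "norm (cnj (g x) * h x) \<le> norm (F x)" by simp
  qed
qed

lemma l2inner_summable:
  assumes "g \<in> ell2" "h \<in> ell2"
  shows "(\<lambda>x. cnj (g x) * h x) summable_on UNIV"
  by (rule abs_summable_summable) (use l2inner_abs_summable[OF assms] in simp)

lemma has_sum_l2inner:
  assumes "g \<in> ell2" "h \<in> ell2"
  shows "((\<lambda>x. cnj (g x) * h x) has_sum l2inner g h) UNIV"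
  using l2inner_summable[OF assms] by (simp add: l2inner_def)

lemma l2inner_cauchy_schwarz:
  assumes "g \<in> ell2" "h \<in> ell2"
  shows "cmod (l2inner g h) \<le> l2norm g * l2norm h"
proof -
  have "cmod (l2inner g h) \<le> infsum (\<lambda>x. norm (cnj (g x) * h x)) UNIV"
    unfolding l2inner_def by (rule norm_infsum_bound) (rule l2inner_abs_summable[OF assms])
  also have "\<dots> \<le> l2norm g * l2norm h"
  proof (rule infsum_le_finite_sums)
    show "(\<lambda>x. norm (cnj (g x) * h x)) summable_on UNIV"
      using l2inner_abs_summable[OF assms] by simp
  next
    fix F :: "'a set" assume F: "finite F" "F \<subseteq> UNIV"
    have "(\<Sum>x\<in>F. norm (cnj (g x) * h x)) = (\<Sum>x\<in>F. \<bar>cmod (g x)\<bar> * \<bar>cmod (h x)\<bar>)"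
      by (simp add: norm_mult)
    also have "\<dots> \<le> L2_set (\<lambda>x. cmod (g x)) F * L2_set (\<lambda>x. cmod (h x)) F"
      by (rule L2_set_mult_ineq)
    also have "\<dots> \<le> l2norm g * l2norm h"
      using sqrt_sum_le_l2norm[OF assms(1) F(1)] sqrt_sum_le_l2norm[OF assms(2) F(1)]
      by (intro mult_mono) (auto simp: L2_set_def l2norm_nonneg sum_nonneg)
    finally show "(\<Sum>x\<in>F. norm (cnj (g x) * h x)) \<le> l2norm g * l2norm h" .
  qed
  finally show ?thesis .
qed

lemma l2inner_self: "g \<in> ell2 \<Longrightarrow> l2inner g g = complex_of_real (sq_l2norm g)"
proof -
  assume g: "g \<in> ell2"
  have "((\<lambda>x. complex_of_real ((cmod (g x))\<^sup>2)) has_sum complex_of_real (sq_l2norm g)) UNIV"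
    by (rule has_sum_bounded_linear[OF bounded_linear_of_real has_sum_sq_l2norm[OF g]])
  moreover have "\<And>x. complex_of_real ((cmod (g x))\<^sup>2) = cnj (g x) * g x"
    by (metis complex_norm_square mult.commute of_real_power)
  ultimately have "((\<lambda>x. cnj (g x) * g x) has_sum complex_of_real (sq_l2norm g)) UNIV" by simp
  then show ?thesis using has_sum_l2inner[OF g g] has_sum_unique by blast
qed

lemma l2inner_add_scaled_right:
  assumes "g \<in> ell2" "h1 \<in> ell2" "h2 \<in> ell2"
  shows "l2inner g (\<lambda>x. h1 x + c * h2 x) = l2inner g h1 + c * l2inner g h2"
proof -
  have "((\<lambda>x. cnj (g x) * h1 x + c * (cnj (g x) * h2 x)) has_sum (l2inner g h1 + c * l2inner g h2)) UNIV"
    by (intro has_sum_add has_sum_cmult_right has_sum_l2inner assms)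
  moreover have "(\<lambda>x. cnj (g x) * h1 x + c * (cnj (g x) * h2 x)) = (\<lambda>x. cnj (g x) * (h1 x + c * h2 x))"
    by (auto simp: algebra_simps)
  ultimately show ?thesis using has_sum_l2inner[OF assms(1) ell2_add_scaled[OF assms(2,3)]]
      has_sum_unique by metis
qed

lemma l2inner_add_scaled_left:
  assumes "g1 \<in> ell2" "g2 \<in> ell2" "h \<in> ell2"
  shows "l2inner (\<lambda>x. g1 x + c * g2 x) h = l2inner g1 h + cnj c * l2inner g2 h"
proof -
  have "((\<lambda>x. cnj (g1 x) * h x + cnj c * (cnj (g2 x) * h x))
      has_sum (l2inner g1 h + cnj c * l2inner g2 h)) UNIV"
    by (intro has_sum_add has_sum_cmult_right has_sum_l2inner assms)
  moreover have "(\<lambda>x. cnj (g1 x) * h x + cnj c * (cnj (g2 x) * h x)) = (\<lambda>x. cnj (g1 x + c * g2 x) * h x)"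
    by (auto simp: algebra_simps)
  ultimately show ?thesis using has_sum_l2inner[OF ell2_add_scaled[OF assms(1,2)] assms(3)]
      has_sum_unique by metis
qed

lemma l2inner_diff_left:
  "g1 \<in> ell2 \<Longrightarrow> g2 \<in> ell2 \<Longrightarrow> h \<in> ell2 \<Longrightarrow>
    l2inner (\<lambda>x. g1 x - g2 x) h = l2inner g1 h - l2inner g2 h"
  using l2inner_add_scaled_left[of g1 g2 h "-1"] by simp

lemma l2inner_diff_right:
  "g \<in> ell2 \<Longrightarrow> h1 \<in> ell2 \<Longrightarrow> h2 \<in> ell2 \<Longrightarrow>
    l2inner g (\<lambda>x. h1 x - h2 x) = l2inner g h1 - l2inner g h2"
  using l2inner_add_scaled_right[of g h1 h2 "-1"] by simp

lemma l2inner_cnj: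
  assumes "g \<in> ell2" "h \<in> ell2"
  shows "l2inner h g = cnj (l2inner g h)"
proof -
  have "((\<lambda>x. cnj (cnj (g x) * h x)) has_sum cnj (l2inner g h)) UNIV"
    by (rule has_sum_bounded_linear[OF bounded_linear_cnj has_sum_l2inner[OF assms]])
  then have "((\<lambda>x. cnj (h x) * g x) has_sum cnj (l2inner g h)) UNIV"
    by (simp add: mult.commute)
  then show ?thesis using has_sum_l2inner[OF assms(2,1)] has_sum_unique by blast
qed

lemma l2inner_zero_left[simp]: "l2inner (\<lambda>x. 0) h = 0"
  by (simp add: l2inner_def)

lemma l2inner_zero_right[simp]: "l2inner g (\<lambda>x. 0) = 0"
  by (simp add: l2inner_def)

definition delta :: "'a \<Rightarrow> 'a \<Rightarrow> complex" where
  "delta y = (\<lambda>x. if x = y then 1 else 0)"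

lemma ell2_delta[simp]: "delta y \<in> ell2"
proof -
  have "delta y \<in> ell2 \<and> l2norm (delta y) \<le> 1"
  proof (rule ell2I_l2norm_le)
    fix F :: "'a set" assume "finite F"
    have e: "(\<lambda>x. (cmod (delta y x))\<^sup>2) = (\<lambda>x. if x = y then 1 else 0)"
      by (auto simp: delta_def)
    show "sqrt (\<Sum>x\<in>F. (cmod (delta y x))\<^sup>2) \<le> 1"
      using \<open>finite F\<close> unfolding e by (cases "y \<in> F") (simp_all add: sum.delta)
  qed
  then show ?thesis by simp
qed

lemma l2norm_delta[simp]: "l2norm (delta y) = 1"
proof -
  have "((\<lambda>x. (cmod (delta y x))\<^sup>2) has_sum 1) UNIV"
    by (rule has_sum_finite_neutralI[of "{y}"]) (auto simp: delta_def)
  then show ?thesis unfolding l2norm_def by (simp add: infsumI)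
qed

lemma l2inner_delta_left: "l2inner (delta y) h = h y"
proof -
  have "((\<lambda>x. cnj (delta y x) * h x) has_sum h y) UNIV"
    by (rule has_sum_finite_neutralI[of "{y}"]) (auto simp: delta_def)
  then show ?thesis unfolding l2inner_def by (simp add: infsumI)
qed

lemma l2inner_delta_right: "l2inner h (delta y) = cnj (h y)"
proof -
  have "((\<lambda>x. cnj (h x) * delta y x) has_sum cnj (h y)) UNIV"
    by (rule has_sum_finite_neutralI[of "{y}"]) (auto simp: delta_def)
  then show ?thesis unfolding l2inner_def by (simp add: infsumI)
qed

lemma ell2_sum_scaled:
  assumes "finite F" "\<And>y. y \<in> F \<Longrightarrow> f y \<in> ell2"
  shows "(\<lambda>x. \<Sum>y\<in>F. c y * f y x) \<in> ell2"
  using assms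
proof (induction F rule: finite_induct)
  case empty then show ?case by simp
next
  case (insert a F)
  have "(\<lambda>x. (\<Sum>y\<in>F. c y * f y x) + c a * f a x) \<in> ell2"
    using insert by (intro ell2_add_scaled) auto
  then show ?case using insert by (simp add: add.commute)
qed

lemma l2inner_sum_left:
  assumes "finite F" "\<And>y. y \<in> F \<Longrightarrow> f y \<in> ell2" "h \<in> ell2"
  shows "l2inner (\<lambda>x. \<Sum>y\<in>F. c y * f y x) h = (\<Sum>y\<in>F. cnj (c y) * l2inner (f y) h)"
  using assms(1,2)
proof (induction F rule: finite_induct)
  case empty then show ?case by simp
next
  case (insert a F)
  have "l2inner (\<lambda>x. (\<Sum>y\<in>F. c y * f y x) + c a * f a x) h
      = l2inner (\<lambda>x. \<Sum>y\<in>F. c y * f y x) h + cnj (c a) * l2inner (f a) h"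
    using insert assms(3) by (intro l2inner_add_scaled_left ell2_sum_scaled) auto
  then show ?case using insert by (simp add: add.commute)
qed

lemma restrict_eq_sum_delta:
  assumes "finite F"
  shows "(\<lambda>x. if x \<in> F then g x else 0) = (\<lambda>x. \<Sum>y\<in>F. g y * delta y x)"
  using assms by (auto simp: delta_def fun_eq_iff if_distrib sum.delta cong: if_cong)

lemma sq_l2norm_restrict:
  assumes "finite F"
  shows "sq_l2norm (\<lambda>x. if x \<in> F then g x else 0) = (\<Sum>x\<in>F. (cmod (g x))\<^sup>2)"
proof -
  have "((\<lambda>x. (cmod (if x \<in> F then g x else 0))\<^sup>2) has_sum (\<Sum>x\<in>F. (cmod (g x))\<^sup>2)) UNIV"
    by (rule has_sum_finite_neutralI[of F]) (use assms in auto)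
  then show ?thesis unfolding sq_l2norm_def by (simp add: infsumI)
qed

lemma l2inner_restrict:
  assumes F: "finite F" and g: "g \<in> ell2"
  shows "l2inner (\<lambda>x. if x \<in> F then \<xi> x else 0) g = (\<Sum>b\<in>F. cnj (\<xi> b) * g b)"
  unfolding restrict_eq_sum_delta[OF F] using F g by (simp add: l2inner_sum_left l2inner_delta_left)

lemma sq_l2norm_restrict_compl:
  assumes g: "g \<in> ell2" and F: "finite F"
  shows "sq_l2norm (\<lambda>x. if x \<in> F then 0 else g x) = sq_l2norm g - (\<Sum>x\<in>F. (cmod (g x))\<^sup>2)"
proof -
  have a: "((\<lambda>x. if x \<in> F then (cmod (g x))\<^sup>2 else 0) has_sum (\<Sum>x\<in>F. (cmod (g x))\<^sup>2)) UNIV"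
    by (rule has_sum_finite_neutralI[of F]) (use F in auto)
  have "((\<lambda>x. (cmod (g x))\<^sup>2 + - (if x \<in> F then (cmod (g x))\<^sup>2 else 0))
      has_sum (sq_l2norm g + - (\<Sum>x\<in>F. (cmod (g x))\<^sup>2))) UNIV"
    by (intro has_sum_add has_sum_sq_l2norm g has_sum_uminusI a)
  moreover have "(\<lambda>x. (cmod (g x))\<^sup>2 + - (if x \<in> F then (cmod (g x))\<^sup>2 else 0))
      = (\<lambda>x. (cmod (if x \<in> F then 0 else g x))\<^sup>2)"
    by auto
  ultimately show ?thesis unfolding sq_l2norm_def by (simp add: infsumI)
qed

lemma ell2_restrict:
  "g \<in> ell2 \<Longrightarrow> (\<lambda>x. if x \<in> F then g x else 0) \<in> ell2"
proof -
  assume g: "g \<in> ell2"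
  have "(\<lambda>x. if x \<in> F then g x else 0) \<in> ell2 \<and> sq_l2norm (\<lambda>x. if x \<in> F then g x else 0) \<le> sq_l2norm g"
    by (rule ell2I_sq_l2norm_le) (auto intro: order_trans[OF sum_mono sum_le_sq_l2norm[OF g]])
  then show ?thesis by blast
qed

lemma l2norm_restrict_le:
  assumes \<xi>: "\<xi> \<in> ell2"
  shows "l2norm (\<lambda>x. if x \<in> F then \<xi> x else 0) \<le> l2norm \<xi>"
proof -
  have "(\<lambda>x. if x \<in> F then \<xi> x else 0) \<in> ell2 \<and> l2norm (\<lambda>x. if x \<in> F then \<xi> x else 0) \<le> l2norm \<xi>"
  proof (rule ell2I_l2norm_le)
    fix G :: "'a set" assume G: "finite G"
    have "(\<Sum>x\<in>G. (cmod (if x \<in> F then \<xi> x else 0))\<^sup>2) \<le> (\<Sum>x\<in>G. (cmod (\<xi> x))\<^sup>2)"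
      by (rule sum_mono) simp
    then show "sqrt (\<Sum>x\<in>G. (cmod (if x \<in> F then \<xi> x else 0))\<^sup>2) \<le> l2norm \<xi>"
      using sqrt_sum_le_l2norm[OF \<xi> G] by (meson order_trans real_sqrt_le_mono)
  qed
  then show ?thesis by blast
qed

lemma l2norm_diff_restrict_tendsto_0:
  assumes g: "g \<in> ell2"
  shows "((\<lambda>F. l2norm (\<lambda>x. g x - (if x \<in> F then g x else 0))) \<longlongrightarrow> 0)
           (finite_subsets_at_top UNIV)"
proof -
  let ?s = "\<lambda>F. \<Sum>x\<in>F. (cmod (g x))\<^sup>2"
  have "(?s \<longlongrightarrow> sq_l2norm g) (finite_subsets_at_top UNIV)"
    using has_sum_sq_l2norm[OF g] by (simp add: has_sum_def)
  then have "((\<lambda>F. sqrt (sq_l2norm g - ?s F)) \<longlongrightarrow> sqrt (sq_l2norm g - sq_l2norm g))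
               (finite_subsets_at_top UNIV)"
    by (intro tendsto_real_sqrt tendsto_diff tendsto_const)
  moreover have "sqrt (sq_l2norm g - ?s F) = l2norm (\<lambda>x. g x - (if x \<in> F then g x else 0))"
    if "finite F" for F
  proof -
    have "(\<lambda>x. g x - (if x \<in> F then g x else 0)) = (\<lambda>x. if x \<in> F then 0 else g x)" by auto
    then show ?thesis using sq_l2norm_restrict_compl[OF g that] by (simp add: l2norm_eq_sqrt)
  qed
  then have "\<forall>\<^sub>F F in finite_subsets_at_top UNIV.
               sqrt (sq_l2norm g - ?s F) = l2norm (\<lambda>x. g x - (if x \<in> F then g x else 0))"
    by (rule eventually_finite_subsets_at_top_weakI)
  ultimately show ?thesis by (simp add: tendsto_cong)
qed

section \<open>Bounded operators\<close>

lemma bounded_op_ell2: "bounded_op T \<Longrightarrow> T g \<in> ell2"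
  unfolding bounded_op_def by (cases "g \<in> ell2") auto

lemma bounded_op_outside:
  "bounded_op T \<Longrightarrow> g \<notin> ell2 \<Longrightarrow> T g = (\<lambda>x. 0)"
  unfolding bounded_op_def by auto

lemma bounded_op_linear: "bounded_op T \<Longrightarrow> g \<in> ell2 \<Longrightarrow> h \<in> ell2 \<Longrightarrow>
  T (\<lambda>x. g x + c * h x) = (\<lambda>x. T g x + c * T h x)"
  unfolding bounded_op_def by blast

lemma bounded_op_apply_zero: assumes "bounded_op T" shows "T (\<lambda>x. 0) = (\<lambda>x. 0)"
proof -
  have "T (\<lambda>x. 0 + 1 * 0) = (\<lambda>x. T (\<lambda>x. 0) x + 1 * T (\<lambda>x. 0) x)"
    by (rule bounded_op_linear[OF assms]) auto
  then have "\<And>x. T (\<lambda>x. 0) x = T (\<lambda>x. 0) x + T (\<lambda>x. 0) x" by (simp add: fun_eq_iff)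
  then show ?thesis by (simp add: fun_eq_iff)
qed

lemma bounded_op_apply_scale: assumes "bounded_op T" "g \<in> ell2" shows "T (\<lambda>x. c * g x) = (\<lambda>x. c * T g x)"
  using bounded_op_linear[OF assms(1) ell2_zero assms(2), of c] bounded_op_apply_zero[OF assms(1)]
    by simp

lemma bounded_op_apply_add: assumes "bounded_op T" "g \<in> ell2" "h \<in> ell2"
  shows "T (\<lambda>x. g x + h x) = (\<lambda>x. T g x + T h x)"
  using bounded_op_linear[OF assms, of 1] by simp

lemma bounded_op_apply_diff: assumes "bounded_op T" "g \<in> ell2" "h \<in> ell2"
  shows "T (\<lambda>x. g x - h x) = (\<lambda>x. T g x - T h x)"
  using bounded_op_linear[OF assms, of "-1"] by simp

lemma bounded_op_apply_sum:
  assumes T: "bounded_op T" and "finite F" "\<And>y. y \<in> F \<Longrightarrow> f y \<in> ell2"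
  shows "T (\<lambda>x. \<Sum>y\<in>F. c y * f y x) = (\<lambda>x. \<Sum>y\<in>F. c y * T (f y) x)"
  using assms(2,3)
proof (induction F rule: finite_induct)
  case empty then show ?case using bounded_op_apply_zero[OF T] by simp
next
  case (insert a F)
  have "T (\<lambda>x. (\<Sum>y\<in>F. c y * f y x) + c a * f a x) = (\<lambda>x. T (\<lambda>x. \<Sum>y\<in>F. c y * f y x) x + c a * T (f a) x)"
    using insert by (intro bounded_op_linear T ell2_sum_scaled) auto
  then show ?case using insert by (simp add: add.commute)
qed

lemma bdd_above_op_norm_set:
  assumes "bounded_op T"
  shows "bdd_above {l2norm (T g) | g. g \<in> ell2 \<and> l2norm g \<le> 1}"
proof -
  obtain K where K: "\<forall>g\<in>ell2. l2norm (T g) \<le> K * l2norm g"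
    using assms unfolding bounded_op_def by blast
  have "l2norm (T g) \<le> \<bar>K\<bar>" if "g \<in> ell2" "l2norm g \<le> 1" for g
  proof -
    have "l2norm (T g) \<le> K * l2norm g" using K that by blast
    also have "\<dots> \<le> \<bar>K\<bar> * l2norm g" by (intro mult_right_mono) (auto simp: l2norm_nonneg)
    also have "\<dots> \<le> \<bar>K\<bar>" using that by (simp add: mult_left_le)
    finally show ?thesis .
  qed
  then show ?thesis by (intro bdd_aboveI[of _ "\<bar>K\<bar>"]) blast
qed

lemma l2norm_apply_le_op_norm:
  assumes "bounded_op T" "g \<in> ell2" "l2norm g \<le> 1"
  shows "l2norm (T g) \<le> op_norm T"
  unfolding op_norm_def using assms bdd_above_op_norm_set by (intro cSup_upper) blast+

lemma op_norm_nonneg: "bounded_op T \<Longrightarrow> 0 \<le> op_norm T"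
  using l2norm_apply_le_op_norm[OF _ ell2_zero, of T] l2norm_nonneg[of "T (\<lambda>x. 0)"] by simp

lemma l2norm_apply_le:
  assumes T: "bounded_op T" and g: "g \<in> ell2"
  shows "l2norm (T g) \<le> op_norm T * l2norm g"
proof (cases "l2norm g = 0")
  case True
  then have "g = (\<lambda>x. 0)" using l2norm_eq_0 g by blast
  then show ?thesis using bounded_op_apply_zero[OF T] by simp
next
  case False
  define n where "n = l2norm g"
  have n: "n > 0" using False l2norm_nonneg[of g] by (simp add: n_def)
  define g' where "g' = (\<lambda>x. complex_of_real (1/n) * g x)"
  have "l2norm g' = cmod (complex_of_real (1/n)) * n"
    unfolding g'_def l2norm_scale n_def ..
  then have g': "g' \<in> ell2" "l2norm g' = 1"
    using n by (simp_all add: g'_def ell2_scale[OF g] norm_divide del: of_real_divide)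
  have "T g' = (\<lambda>x. complex_of_real (1/n) * T g x)"
    unfolding g'_def by (rule bounded_op_apply_scale[OF T g])
  then have "l2norm (T g') = cmod (complex_of_real (1/n)) * l2norm (T g)"
    by (simp only: l2norm_scale)
  then have "l2norm (T g') = l2norm (T g) / n"
    using n by (simp add: norm_divide)
  moreover have "l2norm (T g') \<le> op_norm T"
    using g' by (intro l2norm_apply_le_op_norm T) auto
  ultimately show ?thesis using n by (simp add: n_def field_simps)
qed

lemma op_norm_le:
  assumes "0 \<le> K" "\<And>g. g \<in> ell2 \<Longrightarrow> l2norm (T g) \<le> K * l2norm g"
  shows "op_norm T \<le> K"
  unfolding op_norm_def
proof (rule cSup_least)
  show "{l2norm (T g) | g. g \<in> ell2 \<and> l2norm g \<le> 1} \<noteq> {}"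
    using ell2_zero l2norm_zero by fastforce
next
  fix x assume "x \<in> {l2norm (T g) | g. g \<in> ell2 \<and> l2norm g \<le> 1}"
  then obtain g where g: "g \<in> ell2" "l2norm g \<le> 1" "x = l2norm (T g)" by blast
  have "l2norm (T g) \<le> K * l2norm g" using assms g by blast
  also have "\<dots> \<le> K" using g assms by (simp add: mult_left_le)
  finally show "x \<le> K" using g by simp
qed

lemma norm_entry_le_op_norm: "bounded_op X \<Longrightarrow> cmod (X (delta w) y) \<le> op_norm X"
proof -
  assume X: "bounded_op X"
  have "cmod (X (delta w) y) \<le> l2norm (X (delta w))" by (rule norm_le_l2norm[OF bounded_op_ell2[OF X]])
  also have "\<dots> \<le> op_norm X * l2norm (delta w)" by (rule l2norm_apply_le[OF X ell2_delta])
  finally show ?thesis by simp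
qed

lemma bounded_opI:
  assumes "\<And>g. g \<in> ell2 \<Longrightarrow> T g \<in> ell2"
    and "\<And>g h c. g \<in> ell2 \<Longrightarrow> h \<in> ell2 \<Longrightarrow> T (\<lambda>x. g x + c * h x) = (\<lambda>x. T g x + c * T h x)"
    and "\<And>g. g \<in> ell2 \<Longrightarrow> l2norm (T g) \<le> K * l2norm g"
    and "\<And>g. g \<notin> ell2 \<Longrightarrow> T g = (\<lambda>_. 0)"
  shows "bounded_op T"
  unfolding bounded_op_def using assms by blast

lemma bounded_op_zero[simp]: "bounded_op op_zero"
  by (rule bounded_opI[where K=0]) (auto simp: op_zero_def)

lemma op_norm_zero[simp]: "op_norm (op_zero :: 'a op) = 0"
proof -
  have a: "op_norm (op_zero :: 'a op) \<le> 0" by (rule op_norm_le) (auto simp: op_zero_def)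
  have b: "0 \<le> op_norm (op_zero :: 'a op)" by (rule op_norm_nonneg) simp
  show ?thesis using a b by linarith
qed

lemma bounded_op_add:
  assumes S: "bounded_op S" and T: "bounded_op T"
  shows "bounded_op (op_add S T)" "op_norm (op_add S T) \<le> op_norm S + op_norm T"
proof -
  have b: "l2norm (op_add S T g) \<le> (op_norm S + op_norm T) * l2norm g" if g: "g \<in> ell2" for g
  proof -
    have "l2norm (op_add S T g) \<le> l2norm (S g) + l2norm (T g)"
      unfolding op_add_def by (rule l2norm_add) (auto intro: bounded_op_ell2 S T)
    also have "\<dots> \<le> op_norm S * l2norm g + op_norm T * l2norm g"
      by (intro add_mono l2norm_apply_le S T g)
    finally show ?thesis by (simp add: algebra_simps)
  qed
  show "bounded_op (op_add S T)"
  proof (rule bounded_opI[where K="op_norm S + op_norm T"])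
    fix g h :: "'a \<Rightarrow> complex" and c assume g: "g \<in> ell2" and h: "h \<in> ell2"
    show "op_add S T (\<lambda>x. g x + c * h x) = (\<lambda>x. op_add S T g x + c * op_add S T h x)"
      using bounded_op_linear[OF S g h, of c] bounded_op_linear[OF T g h, of c]
        by (simp add: op_add_def algebra_simps)
  qed (use S T b in \<open>auto simp: op_add_def bounded_op_outside
                        intro!: ell2_add bounded_op_ell2[OF S] bounded_op_ell2[OF T]\<close>)
  show "op_norm (op_add S T) \<le> op_norm S + op_norm T"
    using b op_norm_nonneg[OF S] op_norm_nonneg[OF T] by (intro op_norm_le) auto
qed

lemma bounded_op_diff:
  assumes S: "bounded_op S" and T: "bounded_op T"
  shows "bounded_op (op_diff S T)" "op_norm (op_diff S T) \<le> op_norm S + op_norm T"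
proof -
  have b: "l2norm (op_diff S T g) \<le> (op_norm S + op_norm T) * l2norm g" if g: "g \<in> ell2" for g
  proof -
    have "l2norm (op_diff S T g) \<le> l2norm (S g) + l2norm (T g)"
      unfolding op_diff_def by (rule l2norm_diff) (auto intro: bounded_op_ell2 S T)
    also have "\<dots> \<le> op_norm S * l2norm g + op_norm T * l2norm g"
      by (intro add_mono l2norm_apply_le S T g)
    finally show ?thesis by (simp add: algebra_simps)
  qed
  show "bounded_op (op_diff S T)"
  proof (rule bounded_opI[where K="op_norm S + op_norm T"])
    fix g h :: "'a \<Rightarrow> complex" and c assume g: "g \<in> ell2" and h: "h \<in> ell2"
    show "op_diff S T (\<lambda>x. g x + c * h x) = (\<lambda>x. op_diff S T g x + c * op_diff S T h x)"
      using bounded_op_linear[OF S g h, of c] bounded_op_linear[OF T g h, of c]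
        by (simp add: op_diff_def algebra_simps)
  qed (use S T b in \<open>auto simp: op_diff_def bounded_op_outside
                        intro!: ell2_diff bounded_op_ell2[OF S] bounded_op_ell2[OF T]\<close>)
  show "op_norm (op_diff S T) \<le> op_norm S + op_norm T"
    using b op_norm_nonneg[OF S] op_norm_nonneg[OF T] by (intro op_norm_le) auto
qed

lemma bounded_op_scale:
  assumes T: "bounded_op T"
  shows "bounded_op (op_scale c T)" "op_norm (op_scale c T) \<le> cmod c * op_norm T"
proof -
  have b: "l2norm (op_scale c T g) \<le> (cmod c * op_norm T) * l2norm g" if g: "g \<in> ell2" for g
    using l2norm_apply_le[OF T g] by (simp add: op_scale_def l2norm_scale mult.assoc mult_left_mono)
  show "bounded_op (op_scale c T)"
  proof (rule bounded_opI[where K="cmod c * op_norm T"])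
    fix g h :: "'a \<Rightarrow> complex" and d assume g: "g \<in> ell2" and h: "h \<in> ell2"
    show "op_scale c T (\<lambda>x. g x + d * h x) = (\<lambda>x. op_scale c T g x + d * op_scale c T h x)"
      using bounded_op_linear[OF T g h, of d] by (simp add: op_scale_def algebra_simps)
  qed (use T b in \<open>auto simp: op_scale_def bounded_op_outside intro!: ell2_scale bounded_op_ell2[OF T]\<close>)
  show "op_norm (op_scale c T) \<le> cmod c * op_norm T"
    using b op_norm_nonneg[OF T] by (intro op_norm_le) auto
qed

lemma bounded_op_mult:
  assumes S: "bounded_op S" and T: "bounded_op T"
  shows "bounded_op (op_mult S T)" "op_norm (op_mult S T) \<le> op_norm S * op_norm T"
proof -
  have b: "l2norm (op_mult S T g) \<le> (op_norm S * op_norm T) * l2norm g" if g: "g \<in> ell2" for g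
  proof -
    have "l2norm (S (T g)) \<le> op_norm S * l2norm (T g)"
      by (rule l2norm_apply_le[OF S bounded_op_ell2[OF T]])
    also have "\<dots> \<le> op_norm S * (op_norm T * l2norm g)"
      by (rule mult_left_mono[OF l2norm_apply_le[OF T g] op_norm_nonneg[OF S]])
    finally show ?thesis by (simp add: op_mult_def mult.assoc)
  qed
  show "bounded_op (op_mult S T)"
  proof (rule bounded_opI[where K="op_norm S * op_norm T"])
    fix g h :: "'a \<Rightarrow> complex" and c assume g: "g \<in> ell2" and h: "h \<in> ell2"
    show "op_mult S T (\<lambda>x. g x + c * h x) = (\<lambda>x. op_mult S T g x + c * op_mult S T h x)"
      using bounded_op_linear[OF T g h, of c] bounded_op_linear[OF S bounded_op_ell2[OF T, of g]
          bounded_op_ell2[OF T, of h], of c]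
      by (simp add: op_mult_def)
  qed (use S T b in \<open>auto simp: op_mult_def bounded_op_outside bounded_op_apply_zero[OF S]
                        intro!: bounded_op_ell2[OF S]\<close>)
  show "op_norm (op_mult S T) \<le> op_norm S * op_norm T"
    using b op_norm_nonneg[OF S] op_norm_nonneg[OF T] by (intro op_norm_le) auto
qed

lemma op_norm_diff_sym:
  assumes "bounded_op S" "bounded_op T"
  shows "op_norm (op_diff S T) = op_norm (op_diff T S)"
proof -
  have "op_diff T S = op_scale (-1) (op_diff S T)"
    by (simp add: op_diff_def op_scale_def fun_eq_iff)
  then have 1: "op_norm (op_diff T S) \<le> op_norm (op_diff S T)"
    using bounded_op_scale(2)[OF bounded_op_diff(1)[OF assms], of "-1"] by simp
  have "op_diff S T = op_scale (-1) (op_diff T S)"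
    by (simp add: op_diff_def op_scale_def fun_eq_iff)
  then have 2: "op_norm (op_diff S T) \<le> op_norm (op_diff T S)"
    using bounded_op_scale(2)[OF bounded_op_diff(1)[OF assms(2,1)], of "-1"] by simp
  show ?thesis using 1 2 by simp
qed

lemma op_norm_triangle:
  assumes "bounded_op A" "bounded_op B" "bounded_op C"
  shows "op_norm (op_diff A C) \<le> op_norm (op_diff A B) + op_norm (op_diff B C)"
proof -
  have "op_diff A C = op_add (op_diff A B) (op_diff B C)"
    by (simp add: op_diff_def op_add_def fun_eq_iff)
  then show ?thesis using bounded_op_add(2)[OF bounded_op_diff(1)[OF assms(1,2)]
      bounded_op_diff(1)[OF assms(2,3)]]
    by simp
qed

lemma op_norm_mult_diff_le:
  assumes A: "bounded_op A" and B: "bounded_op B" and C: "bounded_op C" and D: "bounded_op D"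
  shows "op_norm (op_diff (op_mult A B) (op_mult C D))
           \<le> op_norm A * op_norm (op_diff B D) + op_norm (op_diff A C) * op_norm D"
proof -
  have "A (\<lambda>x. B g x - D g x) = (\<lambda>x. A (B g) x - A (D g) x)" for g
    by (rule bounded_op_apply_diff[OF A bounded_op_ell2[OF B] bounded_op_ell2[OF D]])
  then have e: "op_diff (op_mult A B) (op_mult C D)
                  = op_add (op_mult A (op_diff B D)) (op_mult (op_diff A C) D)"
    by (simp add: op_add_def op_diff_def op_mult_def fun_eq_iff)
  have bd: "bounded_op (op_diff B D)" "bounded_op (op_diff A C)"
    by (intro bounded_op_diff A B C D)+
  show ?thesis
    unfolding e
    using bounded_op_add(2)[OF bounded_op_mult(1)[OF A bd(1)] bounded_op_mult(1)[OF bd(2) D]]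
      bounded_op_mult(2)[OF A bd(1)] bounded_op_mult(2)[OF bd(2) D]
    by linarith
qed

lemma op_norm_tendsto_0_compare:
  assumes "\<And>x. bounded_op (X x)" "\<And>x. op_norm (X x) \<le> b x" "(b \<longlongrightarrow> 0) F"
  shows "((\<lambda>x. op_norm (X x)) \<longlongrightarrow> 0) F"
proof (rule Lim_null_comparison[OF always_eventually assms(3)], rule allI)
  fix x show "norm (op_norm (X x)) \<le> b x"
    using op_norm_nonneg[OF assms(1)] assms(2) by simp
qed

definition op_sum :: "'k set \<Rightarrow> ('k \<Rightarrow> complex) \<Rightarrow> ('k \<Rightarrow> 'a op) \<Rightarrow> 'a op" where
  "op_sum K c M = (\<lambda>g x. \<Sum>k\<in>K. c k * M k g x)"

lemma op_sum_empty: "op_sum {} c M = op_zero"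
  by (simp add: op_sum_def op_zero_def)

lemma op_sum_insert:
  "finite K \<Longrightarrow> k \<notin> K \<Longrightarrow>
    op_sum (insert k K) c M = op_add (op_scale (c k) (M k)) (op_sum K c M)"
  by (simp add: op_sum_def op_add_def op_scale_def)

lemma op_sum_bounded:
  assumes K: "finite K" and M: "\<And>k. k \<in> K \<Longrightarrow> bounded_op (M k)"
  shows "bounded_op (op_sum K c M) \<and> op_norm (op_sum K c M) \<le> (\<Sum>k\<in>K. cmod (c k) * op_norm (M k))"
  using K M
proof (induction K rule: finite_induct)
  case empty then show ?case by (simp add: op_sum_empty)
next
  case (insert k K)
  have Mk: "bounded_op (M k)" using insert by simp
  have IH: "bounded_op (op_sum K c M)" "op_norm (op_sum K c M) \<le> (\<Sum>k\<in>K. cmod (c k) * op_norm (M k))"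
    using insert by auto
  have b: "bounded_op (op_scale (c k) (M k))" by (rule bounded_op_scale(1)[OF Mk])
  have "op_norm (op_add (op_scale (c k) (M k)) (op_sum K c M))
      \<le> op_norm (op_scale (c k) (M k)) + op_norm (op_sum K c M)"
    by (rule bounded_op_add(2)[OF b IH(1)])
  also have "\<dots> \<le> cmod (c k) * op_norm (M k) + (\<Sum>k\<in>K. cmod (c k) * op_norm (M k))"
    by (intro add_mono bounded_op_scale(2)[OF Mk] IH(2))
  finally show ?case using insert bounded_op_add(1)[OF b IH(1)] by (simp add: op_sum_insert)
qed

lemma op_sum_diff: "op_diff (op_sum K c M) (op_sum K c' M) = op_sum K (\<lambda>k. c k - c' k) M"
  by (simp add: op_sum_def op_diff_def sum_subtractf algebra_simps fun_eq_iff)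

section \<open>Adjoints\<close>

lemma is_adjoint_sym:
  assumes T: "bounded_op T" and S: "bounded_op S" and a: "is_adjoint T S"
  shows "is_adjoint S T"
  unfolding is_adjoint_def
proof (intro ballI)
  fix g h :: "'a \<Rightarrow> complex" assume g: "g \<in> ell2" and h: "h \<in> ell2"
  have "l2inner (S g) h = cnj (l2inner h (S g))" using l2inner_cnj[OF h bounded_op_ell2[OF S]] by simp
  also have "l2inner h (S g) = l2inner (T h) g" using a g h unfolding is_adjoint_def by simp
  also have "cnj (l2inner (T h) g) = l2inner g (T h)"
    using l2inner_cnj[OF bounded_op_ell2[OF T] g] by simp
  finally show "l2inner (S g) h = l2inner g (T h)" .
qed

lemma op_norm_adjoint_le:
  assumes T: "bounded_op T" and S: "bounded_op S" and a: "is_adjoint T S"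
  shows "op_norm S \<le> op_norm T"
proof (rule op_norm_le[OF op_norm_nonneg[OF T]])
  fix h :: "'a \<Rightarrow> complex" assume h: "h \<in> ell2"
  have Sh: "S h \<in> ell2" by (rule bounded_op_ell2[OF S])
  have "complex_of_real (sq_l2norm (S h)) = l2inner (S h) (S h)" using l2inner_self[OF Sh] by simp
  also have "\<dots> = l2inner (T (S h)) h" using a Sh h unfolding is_adjoint_def by simp
  finally have E: "complex_of_real (sq_l2norm (S h)) = l2inner (T (S h)) h" .
  have "sq_l2norm (S h) = cmod (l2inner (T (S h)) h)"
    unfolding E[symmetric] by (simp add: sq_l2norm_nonneg)
  also have "\<dots> \<le> l2norm (T (S h)) * l2norm h"
    by (rule l2inner_cauchy_schwarz[OF bounded_op_ell2[OF T] h])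
  also have "\<dots> \<le> (op_norm T * l2norm (S h)) * l2norm h"
    by (rule mult_right_mono[OF l2norm_apply_le[OF T Sh] l2norm_nonneg])
  finally have 1: "(l2norm (S h))\<^sup>2 \<le> l2norm (S h) * (op_norm T * l2norm h)"
    by (simp add: l2norm_power2 algebra_simps)
  show "l2norm (S h) \<le> op_norm T * l2norm h"
  proof (cases "l2norm (S h) = 0")
    case True then show ?thesis using op_norm_nonneg[OF T] l2norm_nonneg[of h] by simp
  next
    case False
    then have "l2norm (S h) > 0" using l2norm_nonneg[of "S h"] by simp
    then show ?thesis using 1 by (simp add: power2_eq_square)
  qed
qed

lemma op_norm_adjoint:
  assumes T: "bounded_op T" and S: "bounded_op S" and a: "is_adjoint T S"
  shows "op_norm S = op_norm T"
  using op_norm_adjoint_le[OF T S a] op_norm_adjoint_le[OF S T is_adjoint_sym[OF T S a]] by simp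

lemma is_adjoint_unique:
  assumes T: "bounded_op T" and S1: "bounded_op S1" and S2: "bounded_op S2"
    and a1: "is_adjoint T S1" and a2: "is_adjoint T S2"
  shows "S1 = S2"
proof
  fix h
  show "S1 h = S2 h"
  proof (cases "h \<in> ell2")
    case False then show ?thesis using bounded_op_outside[OF S1] bounded_op_outside[OF S2] by simp
  next
    case h: True
    define d where "d = (\<lambda>x. S1 h x - S2 h x)"
    have d: "d \<in> ell2" unfolding d_def by (intro ell2_diff bounded_op_ell2 S1 S2)
    have "l2inner d d = l2inner d (S1 h) - l2inner d (S2 h)"
      unfolding d_def by (rule l2inner_diff_right) (intro ell2_diff bounded_op_ell2 S1 S2)+
    also have "\<dots> = 0"
    proof -
      have "l2inner d (S1 h) = l2inner (T d) h" using a1 d h unfolding is_adjoint_def by simp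
      moreover have "l2inner d (S2 h) = l2inner (T d) h" using a2 d h unfolding is_adjoint_def by simp
      ultimately show ?thesis by simp
    qed
    finally have "sq_l2norm d = 0" using l2inner_self[OF d] by simp
    then have "d = (\<lambda>x. 0)" by (rule sq_l2norm_eq_0[OF d])
    then show ?thesis by (simp add: d_def fun_eq_iff)
  qed
qed

lemma is_adjoint_diff:
  assumes "bounded_op A" "bounded_op A'" "bounded_op B" "bounded_op B'"
    "is_adjoint A A'" "is_adjoint B B'"
  shows "is_adjoint (op_diff A B) (op_diff A' B')"
  unfolding is_adjoint_def op_diff_def
proof (intro ballI)
  fix g h :: "'a \<Rightarrow> complex" assume g: "g \<in> ell2" and h: "h \<in> ell2"
  have 1: "l2inner (A g) h = l2inner g (A' h)" "l2inner (B g) h = l2inner g (B' h)"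
    using assms(5,6) g h unfolding is_adjoint_def by auto
  show "l2inner (\<lambda>x. A g x - B g x) h = l2inner g (\<lambda>x. A' h x - B' h x)"
    using l2inner_diff_left[OF bounded_op_ell2[OF assms(1)] bounded_op_ell2[OF assms(3)] h]
      l2inner_diff_right[OF g bounded_op_ell2[OF assms(2)] bounded_op_ell2[OF assms(4)]] 1 by simp
qed

lemma is_adjoint_mult:
  assumes "bounded_op A" "bounded_op A'" "bounded_op B" "bounded_op B'"
    "is_adjoint A A'" "is_adjoint B B'"
  shows "is_adjoint (op_mult A B) (op_mult B' A')"
  unfolding is_adjoint_def op_mult_def
proof (intro ballI)
  fix g h :: "'a \<Rightarrow> complex" assume g: "g \<in> ell2" and h: "h \<in> ell2"
  have "l2inner (A (B g)) h = l2inner (B g) (A' h)"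
    using assms(5) bounded_op_ell2[OF assms(3)] h unfolding is_adjoint_def by blast
  also have "\<dots> = l2inner g (B' (A' h))"
    using assms(6) g bounded_op_ell2[OF assms(2)] unfolding is_adjoint_def by blast
  finally show "l2inner (A (B g)) h = l2inner g (B' (A' h))" .
qed

definition adj :: "'a op \<Rightarrow> 'a op" where
  "adj T = (\<lambda>h. if h \<in> ell2 then (\<lambda>y. l2inner (T (delta y)) h) else (\<lambda>_. 0))"

lemma l2inner_apply_restrict:
  assumes T: "bounded_op T" and F: "finite F" and h: "h \<in> ell2"
  shows "l2inner (T (\<lambda>x. if x \<in> F then g x else 0)) h = (\<Sum>y\<in>F. cnj (g y) * l2inner (T (delta y)) h)"
proof -
  have "T (\<lambda>x. if x \<in> F then g x else 0) = (\<lambda>x. \<Sum>y\<in>F. g y * T (delta y) x)"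
    unfolding restrict_eq_sum_delta[OF F] by (rule bounded_op_apply_sum[OF T F]) simp
  then show ?thesis using F h by (simp add: l2inner_sum_left bounded_op_ell2[OF T])
qed

lemma adj_l2norm_le:
  assumes T: "bounded_op T" and h: "h \<in> ell2"
  shows "adj T h \<in> ell2 \<and> l2norm (adj T h) \<le> op_norm T * l2norm h"
proof (rule ell2I_l2norm_le)
  fix F :: "'a set" assume F: "finite F"
  define a where "a = (\<lambda>y. l2inner (T (delta y)) h)"
  define A where "A = (\<Sum>x\<in>F. (cmod (a x))\<^sup>2)"
  have A0: "0 \<le> A" unfolding A_def by (simp add: sum_nonneg)
  define gF where "gF = (\<lambda>x. if x \<in> F then a x else 0)"
  have gF: "gF \<in> ell2" unfolding gF_def restrict_eq_sum_delta[OF F] by (rule ell2_sum_scaled[OF F]) simp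
  have ngF: "l2norm gF = sqrt A" unfolding gF_def A_def
    by (simp add: l2norm_eq_sqrt sq_l2norm_restrict[OF F])
  have "l2inner (T gF) h = (\<Sum>y\<in>F. cnj (a y) * a y)"
    unfolding gF_def l2inner_apply_restrict[OF T F h] a_def ..
  also have "\<dots> = complex_of_real A"
    unfolding A_def of_real_sum by (rule sum.cong[OF refl]) (metis complex_norm_square
        mult.commute of_real_power)
  finally have "A = cmod (l2inner (T gF) h)" using A0 by simp
  also have "\<dots> \<le> l2norm (T gF) * l2norm h" by (rule l2inner_cauchy_schwarz[OF bounded_op_ell2[OF T] h])
  also have "\<dots> \<le> (op_norm T * sqrt A) * l2norm h"
    using l2norm_apply_le[OF T gF] ngF by (intro mult_right_mono l2norm_nonneg) auto
  finally have 1: "sqrt A * sqrt A \<le> sqrt A * (op_norm T * l2norm h)"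
    using A0 by (simp add: algebra_simps)
  have "sqrt A \<le> op_norm T * l2norm h"
  proof (cases "sqrt A = 0")
    case True then show ?thesis using op_norm_nonneg[OF T] l2norm_nonneg[of h] by simp
  next
    case False then have p: "sqrt A > 0" using A0 by simp
    show ?thesis using mult_left_le_imp_le[OF 1 p] .
  qed
  moreover have "(\<Sum>x\<in>F. (cmod (adj T h x))\<^sup>2) = A"
    unfolding A_def a_def adj_def using h by simp
  ultimately show "sqrt (\<Sum>x\<in>F. (cmod (adj T h x))\<^sup>2) \<le> op_norm T * l2norm h" by simp
qed

lemma adj_bounded:
  assumes T: "bounded_op T"
  shows "bounded_op (adj T)"
proof (rule bounded_opI[where K="op_norm T"])
  fix g h :: "'a \<Rightarrow> complex" and c assume g: "g \<in> ell2" and h: "h \<in> ell2"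
  show "adj T (\<lambda>x. g x + c * h x) = (\<lambda>x. adj T g x + c * adj T h x)"
    using g h by (simp add: adj_def ell2_add_scaled l2inner_add_scaled_right bounded_op_ell2[OF T])
qed (use adj_l2norm_le[OF T] in \<open>auto simp: adj_def\<close>)

lemma l2inner_apply_restrict_tendsto:
  assumes T: "bounded_op T" and g: "g \<in> ell2" and h: "h \<in> ell2"
  shows "((\<lambda>F. l2inner (T (\<lambda>x. if x \<in> F then g x else 0)) h) \<longlongrightarrow> l2inner (T g) h)
           (finite_subsets_at_top UNIV)"
proof -
  define gR where "gR = (\<lambda>F x. if x \<in> F then g x else (0::complex))"
  have bound: "norm (l2inner (T (gR F)) h - l2inner (T g) h)
                 \<le> op_norm T * l2norm (\<lambda>x. g x - gR F x) * l2norm h" for F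
  proof -
    have gRF: "gR F \<in> ell2" unfolding gR_def by (rule ell2_restrict[OF g])
    have d: "(\<lambda>x. g x - gR F x) \<in> ell2" by (rule ell2_diff[OF g gRF])
    have "l2inner (T (gR F)) h - l2inner (T g) h = - l2inner (\<lambda>x. T g x - T (gR F) x) h"
      by (simp add: l2inner_diff_left bounded_op_ell2[OF T] h)
    also have "(\<lambda>x. T g x - T (gR F) x) = T (\<lambda>x. g x - gR F x)"
      by (rule bounded_op_apply_diff[OF T g gRF, symmetric])
    finally have "norm (l2inner (T (gR F)) h - l2inner (T g) h)
        = cmod (l2inner (T (\<lambda>x. g x - gR F x)) h)"
      by simp
    also have "\<dots> \<le> l2norm (T (\<lambda>x. g x - gR F x)) * l2norm h"
      by (rule l2inner_cauchy_schwarz[OF bounded_op_ell2[OF T] h])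
    also have "\<dots> \<le> op_norm T * l2norm (\<lambda>x. g x - gR F x) * l2norm h"
      by (rule mult_right_mono[OF l2norm_apply_le[OF T d] l2norm_nonneg])
    finally show ?thesis .
  qed
  have "((\<lambda>F. op_norm T * l2norm (\<lambda>x. g x - gR F x) * l2norm h) \<longlongrightarrow> op_norm T * 0 * l2norm h)
          (finite_subsets_at_top UNIV)"
    using l2norm_diff_restrict_tendsto_0[OF g] unfolding gR_def by (intro tendsto_intros) auto
  then have "((\<lambda>F. op_norm T * l2norm (\<lambda>x. g x - gR F x) * l2norm h) \<longlongrightarrow> 0)
               (finite_subsets_at_top UNIV)"
    by simp
  then have "((\<lambda>F. l2inner (T (gR F)) h - l2inner (T g) h) \<longlongrightarrow> 0) (finite_subsets_at_top UNIV)"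
    by (rule Lim_null_comparison[OF always_eventually, rotated]) (simp add: bound)
  then show ?thesis unfolding gR_def by (rule LIM_zero_cancel)
qed

lemma adj_is_adjoint:
  assumes T: "bounded_op T"
  shows "is_adjoint T (adj T)"
  unfolding is_adjoint_def
proof (intro ballI)
  fix g h :: "'a \<Rightarrow> complex" assume g: "g \<in> ell2" and h: "h \<in> ell2"
  have "((\<lambda>y. cnj (g y) * adj T h y) has_sum l2inner g (adj T h)) UNIV"
    by (rule has_sum_l2inner[OF g]) (use adj_l2norm_le[OF T h] in blast)
  then have lim: "((\<lambda>F. \<Sum>y\<in>F. cnj (g y) * adj T h y) \<longlongrightarrow> l2inner g (adj T h)) (finite_subsets_at_top UNIV)"
    by (simp add: has_sum_def)
  have "\<forall>\<^sub>F F in finite_subsets_at_top UNIV.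
          l2inner (T (\<lambda>x. if x \<in> F then g x else 0)) h = (\<Sum>y\<in>F. cnj (g y) * adj T h y)"
    by (rule eventually_finite_subsets_at_top_weakI) (simp add: l2inner_apply_restrict[OF T _ h]
        adj_def h)
  with l2inner_apply_restrict_tendsto[OF T g h]
  have "((\<lambda>F. \<Sum>y\<in>F. cnj (g y) * adj T h y) \<longlongrightarrow> l2inner (T g) h) (finite_subsets_at_top UNIV)"
    by (rule Lim_transform_eventually)
  from tendsto_unique[OF finite_subsets_at_top_neq_bot this lim]
  show "l2inner (T g) h = l2inner g (adj T h)" .
qed

lemma adjoint_exists:
  "bounded_op T \<Longrightarrow> \<exists>S. bounded_op S \<and> is_adjoint T S"
  using adj_bounded adj_is_adjoint by blast

section \<open>Partial translations and the uniform Roe algebra\<close>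

lemma pt_op_apply:
  "g \<in> ell2 \<Longrightarrow>
    pt_op D f g = (\<lambda>y. if y \<in> f ` D then g (inv_into D f y) else 0)"
  by (simp add: pt_op_def)

lemma pt_op_outside: "g \<notin> ell2 \<Longrightarrow> pt_op D f g = (\<lambda>_. 0)"
  by (simp add: pt_op_def)

lemma pt_op_l2norm_le:
  assumes g: "g \<in> ell2"
  shows "pt_op D f g \<in> ell2 \<and> l2norm (pt_op D f g) \<le> 1 * l2norm g"
proof (rule ell2I_l2norm_le)
  fix F :: "'a set" assume F: "finite F"
  have e: "\<And>y. (cmod (pt_op D f g y))\<^sup>2 = (if y \<in> f ` D then (cmod (g (inv_into D f y)))\<^sup>2 else 0)"
    by (simp add: pt_op_apply[OF g])
  have "(\<Sum>y\<in>F. (cmod (pt_op D f g y))\<^sup>2) = (\<Sum>y\<in>F \<inter> f ` D. (cmod (g (inv_into D f y)))\<^sup>2)"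
    unfolding e using F by (simp add: sum.inter_restrict)
  also have "\<dots> = (\<Sum>x\<in>inv_into D f ` (F \<inter> f ` D). (cmod (g x))\<^sup>2)"
    by (rule sum.reindex[symmetric, unfolded comp_def]) (rule inj_on_inv_into, blast)
  also have "\<dots> \<le> sq_l2norm g" using F by (intro sum_le_sq_l2norm g) auto
  finally show "sqrt (\<Sum>y\<in>F. (cmod (pt_op D f g y))\<^sup>2) \<le> 1 * l2norm g"
    by (simp add: l2norm_eq_sqrt)
qed

lemma bounded_pt_op: "bounded_op (pt_op D f)"
proof (rule bounded_opI[where K=1])
  fix g h :: "'a \<Rightarrow> complex" and c assume g: "g \<in> ell2" and h: "h \<in> ell2"
  show "pt_op D f (\<lambda>x. g x + c * h x) = (\<lambda>x. pt_op D f g x + c * pt_op D f h x)"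
    using g h by (simp add: pt_op_apply ell2_add_scaled fun_eq_iff)
qed (use pt_op_l2norm_le in \<open>auto simp: pt_op_outside\<close>)

lemma op_norm_pt_op: "op_norm (pt_op D f) \<le> 1"
  by (rule op_norm_le) (use pt_op_l2norm_le in auto)

lemma partial_translation_subset:
  "partial_translation D f \<Longrightarrow> D' \<subseteq> D \<Longrightarrow>
    partial_translation D' f"
  unfolding partial_translation_def by (meson inj_on_subset subsetD)

lemma partial_translation_id: "partial_translation UNIV id"
  unfolding partial_translation_def by auto

lemma partial_translation_singleton_id: "partial_translation {z} id"
  unfolding partial_translation_def by auto

lemma pt_op_singleton_id:
  "g \<in> ell2 \<Longrightarrow> pt_op {z} id g = (\<lambda>x. g z * delta z x)"
  by (auto simp: pt_op_def delta_def fun_eq_iff)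

lemma partial_translation_const_singleton: "partial_translation {b} (\<lambda>_. a)"
  unfolding partial_translation_def by auto

lemma inv_into_singleton: "inv_into {b} (\<lambda>_. a) a = b"
proof -
  have "inv_into {b} (\<lambda>_. a) a \<in> {b}" by (rule inv_into_into) simp
  then show ?thesis by simp
qed

lemma pt_op_const_singleton_apply:
  "g \<in> ell2 \<Longrightarrow> pt_op {b} (\<lambda>_. a) g x = (if x = a then g b else 0)"
  by (cases "x = a") (simp_all add: pt_op_def inv_into_singleton)

lemma cstar_subalgI:
  assumes "A \<subseteq> {T. bounded_op T}" "op_zero \<in> A"
    "\<And>S T. S \<in> A \<Longrightarrow> T \<in> A \<Longrightarrow> op_add S T \<in> A"
    "\<And>c T. T \<in> A \<Longrightarrow> op_scale c T \<in> A"
    "\<And>S T. S \<in> A \<Longrightarrow> T \<in> A \<Longrightarrow> op_mult S T \<in> A"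
    "\<And>T. T \<in> A \<Longrightarrow> \<exists>S\<in>A. is_adjoint T S"
    "\<And>T s. bounded_op T \<Longrightarrow> (\<And>n. s n \<in> A) \<Longrightarrow> (\<lambda>n. op_norm (op_diff (s n) T)) \<longlonglongrightarrow> 0 \<Longrightarrow> T \<in> A"
  shows "cstar_subalg A"
  unfolding cstar_subalg_def
proof (intro conjI ballI allI impI)
  fix T s assume "bounded_op T \<and> (\<forall>n. s n \<in> A) \<and> (\<lambda>n. op_norm (op_diff (s n) T)) \<longlonglongrightarrow> 0"
  then show "T \<in> A" using assms(7) by blast
qed (use assms(1-6) in auto)

lemma cstar_bounded: "cstar_subalg A \<Longrightarrow> T \<in> A \<Longrightarrow> bounded_op T"
  unfolding cstar_subalg_def by blast

lemma cstar_zero: "cstar_subalg A \<Longrightarrow> op_zero \<in> A"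
  unfolding cstar_subalg_def by blast

lemma cstar_add:
  "cstar_subalg A \<Longrightarrow> S \<in> A \<Longrightarrow> T \<in> A \<Longrightarrow>
    op_add S T \<in> A"
  unfolding cstar_subalg_def by blast

lemma cstar_scale:
  "cstar_subalg A \<Longrightarrow> T \<in> A \<Longrightarrow> op_scale c T \<in> A"
  unfolding cstar_subalg_def by blast

lemma cstar_mult:
  "cstar_subalg A \<Longrightarrow> S \<in> A \<Longrightarrow> T \<in> A \<Longrightarrow>
    op_mult S T \<in> A"
  unfolding cstar_subalg_def by blast

lemma cstar_adjoint:
  "cstar_subalg A \<Longrightarrow> T \<in> A \<Longrightarrow> \<exists>S\<in>A. is_adjoint T S"
  unfolding cstar_subalg_def by blast

lemma cstar_limit:
  "cstar_subalg A \<Longrightarrow> bounded_op T \<Longrightarrow> (\<And>n. s n \<in> A) \<Longrightarrow>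
     (\<lambda>n. op_norm (op_diff (s n) T)) \<longlonglongrightarrow> 0 \<Longrightarrow> T \<in> A"
  unfolding cstar_subalg_def by blast

lemma cstar_diff:
  "cstar_subalg A \<Longrightarrow> S \<in> A \<Longrightarrow> T \<in> A \<Longrightarrow>
    op_diff S T \<in> A"
proof -
  assume A: "cstar_subalg A" and S: "S \<in> A" and T: "T \<in> A"
  have "op_diff S T = op_add S (op_scale (-1) T)"
    by (simp add: op_diff_def op_add_def op_scale_def fun_eq_iff)
  then show ?thesis using A S T cstar_add cstar_scale by metis
qed

lemma op_sum_in_cstar:
  assumes A: "cstar_subalg A" and K: "finite K" and M: "\<And>k. k \<in> K \<Longrightarrow> M k \<in> A"
  shows "op_sum K c M \<in> A"
  using K M
proof (induction K rule: finite_induct)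
  case empty then show ?case using cstar_zero[OF A] by (simp add: op_sum_empty)
next
  case (insert k K)
  then show ?case by (simp add: op_sum_insert cstar_add[OF A] cstar_scale[OF A])
qed

lemma cstar_subalg_bounded_ops: "cstar_subalg {T :: 'a op. bounded_op T}"
proof (rule cstar_subalgI)
  fix T :: "'a op" assume "T \<in> {T. bounded_op T}"
  then show "\<exists>S\<in>{T. bounded_op T}. is_adjoint T S" using adjoint_exists by blast
next
  fix S T :: "'a op" assume "S \<in> {T. bounded_op T}" "T \<in> {T. bounded_op T}"
  then show "op_add S T \<in> {T. bounded_op T}" "op_mult S T \<in> {T. bounded_op T}"
    using bounded_op_add(1) bounded_op_mult(1) by auto
next
  fix c and T :: "'a op" assume "T \<in> {T. bounded_op T}"
  then show "op_scale c T \<in> {T. bounded_op T}" using bounded_op_scale(1) by auto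
qed auto

abbreviation pt_ops :: "'a::metric_space op set" where
  "pt_ops \<equiv> {pt_op D f | D f. partial_translation D f}"

lemma uniform_roe_memI:
  "(\<And>A. cstar_subalg A \<Longrightarrow> pt_ops \<subseteq> A \<Longrightarrow> T \<in> A) \<Longrightarrow> T \<in> uniform_roe"
  unfolding uniform_roe_def by blast

lemma uniform_roe_least:
  "cstar_subalg A \<Longrightarrow> pt_ops \<subseteq> A \<Longrightarrow>
    uniform_roe \<subseteq> A"
  unfolding uniform_roe_def by blast

lemma uniform_roe_bounded: "T \<in> uniform_roe \<Longrightarrow> bounded_op T"
  using uniform_roe_least[OF cstar_subalg_bounded_ops] bounded_pt_op by blast

lemma pt_op_in_uniform_roe: "partial_translation D f \<Longrightarrow> pt_op D f \<in> uniform_roe"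
  unfolding uniform_roe_def by blast

lemma uniform_roe_memI_superset:
  assumes "\<And>A. cstar_subalg A \<Longrightarrow> uniform_roe \<subseteq> A \<Longrightarrow> T \<in> A"
  shows "T \<in> uniform_roe"
proof (rule uniform_roe_memI)
  fix A :: "'a op set" assume "cstar_subalg A" "pt_ops \<subseteq> A"
  then show "T \<in> A" using assms uniform_roe_least by blast
qed

lemma cstar_subalg_uniform_roe: "cstar_subalg (uniform_roe :: 'a::metric_space op set)"
proof (rule cstar_subalgI)
  show "uniform_roe \<subseteq> {T. bounded_op T}" using uniform_roe_bounded by blast
  show "op_zero \<in> uniform_roe"
    by (rule uniform_roe_memI) (rule cstar_zero)
  show "op_add S T \<in> uniform_roe" "op_mult S T \<in> uniform_roe"
    if "S \<in> uniform_roe" "T \<in> uniform_roe" for S T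
    by (rule uniform_roe_memI_superset, use that in \<open>blast intro: cstar_add cstar_mult\<close>)+
  show "op_scale c T \<in> uniform_roe" if "T \<in> uniform_roe" for c T
    by (rule uniform_roe_memI_superset) (use that in \<open>blast intro: cstar_scale\<close>)
  show "T \<in> uniform_roe"
    if T: "bounded_op T" and s: "\<And>n. s n \<in> uniform_roe" and "(\<lambda>n. op_norm (op_diff (s n) T)) \<longlonglongrightarrow> 0"
    for T :: "'a op" and s
  proof (rule uniform_roe_memI_superset)
    fix A :: "'a op set" assume "cstar_subalg A" "uniform_roe \<subseteq> A"
    then show "T \<in> A" using cstar_limit[OF _ T _ that(3)] s by blast
  qed
next
  fix T :: "'a op" assume T: "T \<in> uniform_roe"
  have Tb: "bounded_op T" using uniform_roe_bounded[OF T] .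
  have "adj T \<in> A" if A: "cstar_subalg A" "pt_ops \<subseteq> A" for A
  proof -
    have "T \<in> A" using T A uniform_roe_least by blast
    then obtain S where S: "S \<in> A" "is_adjoint T S" using cstar_adjoint A by blast
    have "S = adj T"
      by (rule is_adjoint_unique[OF Tb cstar_bounded[OF A(1) S(1)] adj_bounded[OF Tb] S(2)
          adj_is_adjoint[OF Tb]])
    then show ?thesis using S by simp
  qed
  then have "adj T \<in> uniform_roe" by (rule uniform_roe_memI)
  then show "\<exists>S\<in>uniform_roe. is_adjoint T S" using adj_is_adjoint[OF Tb] by blast
qed

section \<open>Conjugation by unitaries\<close>

definition Ad :: "'a op \<Rightarrow> 'a op \<Rightarrow> 'a op \<Rightarrow> 'a op" where
  "Ad U V T = (\<lambda>g. U (T (V g)))"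

definition unitary_pair :: "'a op \<Rightarrow> 'a op \<Rightarrow> bool" where
  "unitary_pair U V \<longleftrightarrow> bounded_op U \<and> bounded_op V \<and> (\<forall>g\<in>ell2. U (V g) = g) \<and> (\<forall>g\<in>ell2. V (U g) = g)
     \<and> is_adjoint U V"

lemma unitary_pair_sym: "unitary_pair U V \<Longrightarrow> unitary_pair V U"
  unfolding unitary_pair_def using is_adjoint_sym by blast

lemma unitary_pair_isometry:
  assumes "unitary_pair U V" "g \<in> ell2"
  shows "l2norm (U g) = l2norm g"
proof -
  have U: "bounded_op U" and V: "bounded_op V" using assms unfolding unitary_pair_def by auto
  have "complex_of_real (sq_l2norm (U g)) = l2inner (U g) (U g)"
    by (rule l2inner_self[OF bounded_op_ell2[OF U], symmetric])
  also have "\<dots> = l2inner g (V (U g))"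
    using assms bounded_op_ell2[OF U] unfolding unitary_pair_def is_adjoint_def by blast
  also have "\<dots> = l2inner g g" using assms unfolding unitary_pair_def by simp
  also have "\<dots> = complex_of_real (sq_l2norm g)" by (rule l2inner_self[OF assms(2)])
  finally show ?thesis by (simp add: l2norm_eq_sqrt)
qed

lemma Ad_bounded:
  assumes P: "unitary_pair U V" and T: "bounded_op T"
  shows "bounded_op (Ad U V T)" "op_norm (Ad U V T) \<le> op_norm T"
proof -
  have U: "bounded_op U" and V: "bounded_op V" using P unfolding unitary_pair_def by auto
  have e: "Ad U V T = op_mult U (op_mult T V)" by (simp add: Ad_def op_mult_def)
  show "bounded_op (Ad U V T)" unfolding e by (intro bounded_op_mult U V T)
  show "op_norm (Ad U V T) \<le> op_norm T"
  proof (rule op_norm_le[OF op_norm_nonneg[OF T]])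
    fix g :: "'a \<Rightarrow> complex" assume g: "g \<in> ell2"
    have "l2norm (Ad U V T g) = l2norm (T (V g))"
      unfolding Ad_def by (rule unitary_pair_isometry[OF P bounded_op_ell2[OF T]])
    also have "\<dots> \<le> op_norm T * l2norm (V g)" by (rule l2norm_apply_le[OF T bounded_op_ell2[OF V]])
    also have "l2norm (V g) = l2norm g" by (rule unitary_pair_isometry[OF unitary_pair_sym[OF P] g])
    finally show "l2norm (Ad U V T g) \<le> op_norm T * l2norm g" .
  qed
qed

lemma Ad_inverse:
  assumes P: "unitary_pair U V" and T: "bounded_op T"
  shows "Ad V U (Ad U V T) = T"
proof
  fix g
  have U: "bounded_op U" and V: "bounded_op V" using P unfolding unitary_pair_def by auto
  show "Ad V U (Ad U V T) g = T g"
  proof (cases "g \<in> ell2")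
    case True
    then show ?thesis using P bounded_op_ell2[OF T] unfolding Ad_def unitary_pair_def by simp
  next
    case False
    then show ?thesis using bounded_op_outside[OF U False] bounded_op_outside[OF T False]
        bounded_op_apply_zero[OF T] bounded_op_apply_zero[OF V] bounded_op_apply_zero[OF U]
      unfolding Ad_def by simp
  qed
qed

lemma Ad_zero: assumes "unitary_pair U V" shows "Ad U V op_zero = op_zero"
proof -
  have U: "bounded_op U" using assms unfolding unitary_pair_def by auto
  show ?thesis using bounded_op_apply_zero[OF U] unfolding Ad_def op_zero_def by simp
qed

lemma Ad_add:
  assumes P: "unitary_pair U V" and S: "bounded_op S" and T: "bounded_op T"
  shows "Ad U V (op_add S T) = op_add (Ad U V S) (Ad U V T)"
proof -
  have U: "bounded_op U" using P unfolding unitary_pair_def by auto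
  show ?thesis unfolding Ad_def op_add_def
    using bounded_op_apply_add[OF U bounded_op_ell2[OF S] bounded_op_ell2[OF T]] by simp
qed

lemma Ad_diff:
  assumes P: "unitary_pair U V" and S: "bounded_op S" and T: "bounded_op T"
  shows "Ad U V (op_diff S T) = op_diff (Ad U V S) (Ad U V T)"
proof -
  have U: "bounded_op U" using P unfolding unitary_pair_def by auto
  show ?thesis unfolding Ad_def op_diff_def
    using bounded_op_apply_diff[OF U bounded_op_ell2[OF S] bounded_op_ell2[OF T]] by simp
qed

lemma Ad_scale:
  assumes P: "unitary_pair U V" and T: "bounded_op T"
  shows "Ad U V (op_scale c T) = op_scale c (Ad U V T)"
proof -
  have U: "bounded_op U" using P unfolding unitary_pair_def by auto
  show ?thesis unfolding Ad_def op_scale_def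
    using bounded_op_apply_scale[OF U bounded_op_ell2[OF T]] by simp
qed

lemma Ad_mult:
  assumes P: "unitary_pair U V" and S: "bounded_op S" and T: "bounded_op T"
  shows "Ad U V (op_mult S T) = op_mult (Ad U V S) (Ad U V T)"
  using P bounded_op_ell2[OF T] unfolding Ad_def op_mult_def unitary_pair_def by simp

lemma Ad_adjoint:
  assumes P: "unitary_pair U V" and S: "bounded_op S" and T: "bounded_op T" and a: "is_adjoint T S"
  shows "is_adjoint (Ad U V T) (Ad U V S)"
proof -
  have U: "bounded_op U" and V: "bounded_op V" and UV: "is_adjoint U V" and VU: "is_adjoint V U"
    using P unitary_pair_sym[OF P] unfolding unitary_pair_def by auto
  have "is_adjoint (op_mult U (op_mult T V)) (op_mult (op_mult U S) V)"
    by (intro is_adjoint_mult bounded_op_mult U V S T UV VU a)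
  then show ?thesis by (simp add: Ad_def op_mult_def)
qed

lemma Ad_comp: "Ad U V (Ad U' V' T) = Ad (op_mult U U') (op_mult V' V) T"
  by (simp add: Ad_def op_mult_def)

lemma op_norm_Ad_diff_le:
  assumes P: "unitary_pair U V" and S: "bounded_op S" and T: "bounded_op T"
  shows "op_norm (op_diff (Ad U V S) (Ad U V T)) \<le> op_norm (op_diff S T)"
  using Ad_bounded(2)[OF P bounded_op_diff(1)[OF S T]] Ad_diff[OF P S T] by simp

lemma Ad_in_cstar:
  assumes "cstar_subalg A" "U \<in> A" "V \<in> A" "T \<in> A"
  shows "Ad U V T \<in> A"
proof -
  have "Ad U V T = op_mult U (op_mult T V)" by (simp add: Ad_def op_mult_def)
  then show ?thesis using assms cstar_mult by metis
qed

lemma cstar_subalg_Ad_preimage: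
  assumes P: "unitary_pair U V" and A: "cstar_subalg A"
  shows "cstar_subalg {T. bounded_op T \<and> Ad U V T \<in> A}" (is "cstar_subalg ?A'")
proof (rule cstar_subalgI)
  show "?A' \<subseteq> {T. bounded_op T}" by blast
  show "op_zero \<in> ?A'" using Ad_zero[OF P] cstar_zero[OF A] by simp
  show "op_add S T \<in> ?A'" "op_mult S T \<in> ?A'" if "S \<in> ?A'" "T \<in> ?A'" for S T
    using that bounded_op_add(1) bounded_op_mult(1) Ad_add[OF P] Ad_mult[OF P]
      cstar_add[OF A] cstar_mult[OF A] by auto
  show "op_scale c T \<in> ?A'" if "T \<in> ?A'" for c T
    using that bounded_op_scale(1) Ad_scale[OF P] cstar_scale[OF A] by auto
  show "\<exists>S\<in>?A'. is_adjoint T S" if "T \<in> ?A'" for T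
  proof -
    have T: "bounded_op T" "Ad U V T \<in> A" using that by auto
    obtain S' where S': "S' \<in> A" "is_adjoint (Ad U V T) S'" using cstar_adjoint[OF A T(2)] by blast
    have S'b: "bounded_op S'" using cstar_bounded[OF A S'(1)] .
    have Sb: "bounded_op (Ad V U S')" by (rule Ad_bounded(1)[OF unitary_pair_sym[OF P] S'b])
    have "Ad U V (Ad V U S') = S'" by (rule Ad_inverse[OF unitary_pair_sym[OF P] S'b])
    moreover have "is_adjoint T (Ad V U S')"
      using Ad_adjoint[OF unitary_pair_sym[OF P] S'b Ad_bounded(1)[OF P T(1)] S'(2)]
        Ad_inverse[OF P T(1)]
      by simp
    ultimately show ?thesis using S'(1) Sb by auto
  qed
  show "T \<in> ?A'"
    if T: "bounded_op T" and s: "\<And>n. s n \<in> ?A'" and l: "(\<lambda>n. op_norm (op_diff (s n) T)) \<longlonglongrightarrow> 0" for T s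
  proof -
    have sb: "\<And>n. bounded_op (s n)" and sA: "\<And>n. Ad U V (s n) \<in> A" using s by auto
    have "(\<lambda>n. op_norm (op_diff (Ad U V (s n)) (Ad U V T))) \<longlonglongrightarrow> 0"
      by (rule op_norm_tendsto_0_compare[OF _ op_norm_Ad_diff_le[OF P sb T] l])
        (intro bounded_op_diff Ad_bounded P sb T)
    then show ?thesis using cstar_limit[OF A Ad_bounded(1)[OF P T] sA] T by simp
  qed
qed

lemma Ad_preserves_uniform_roe:
  assumes P: "unitary_pair U V"
    and pt: "\<And>D f. partial_translation D f \<Longrightarrow> Ad U V (pt_op D f) \<in> uniform_roe"
    and T: "T \<in> uniform_roe"
  shows "Ad U V T \<in> uniform_roe"
proof -
  have "pt_ops \<subseteq> {T. bounded_op T \<and> Ad U V T \<in> uniform_roe}"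
    using pt bounded_pt_op by blast
  then have "uniform_roe \<subseteq> {T. bounded_op T \<and> Ad U V T \<in> uniform_roe}"
    by (rule uniform_roe_least[OF cstar_subalg_Ad_preimage[OF P cstar_subalg_uniform_roe]])
  then show ?thesis using T by blast
qed

lemma star_automorphism_Ad:
  assumes P: "unitary_pair U V" and A: "A \<subseteq> {T. bounded_op T}"
    and UV: "\<And>T. T \<in> A \<Longrightarrow> Ad U V T \<in> A" and VU: "\<And>T. T \<in> A \<Longrightarrow> Ad V U T \<in> A"
  shows "star_automorphism A (Ad U V)"
  unfolding star_automorphism_def
proof (intro conjI ballI allI impI)
  show "bij_betw (Ad U V) A A"
  proof (rule bij_betw_byWitness[where f'="Ad V U"])
    show "\<forall>T\<in>A. Ad V U (Ad U V T) = T" using Ad_inverse[OF P] A by blast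
    show "\<forall>T\<in>A. Ad U V (Ad V U T) = T" using Ad_inverse[OF unitary_pair_sym[OF P]] A by blast
    show "Ad U V ` A \<subseteq> A" "Ad V U ` A \<subseteq> A" using UV VU by blast+
  qed
next
  fix S T assume "S \<in> A" "T \<in> A"
  then have S: "bounded_op S" and T: "bounded_op T" using A by auto
  show "Ad U V (op_add S T) = op_add (Ad U V S) (Ad U V T)" by (rule Ad_add[OF P S T])
  show "Ad U V (op_mult S T) = op_mult (Ad U V S) (Ad U V T)" by (rule Ad_mult[OF P S T])
  show "is_adjoint (Ad U V T) (Ad U V S)" if "is_adjoint T S" by (rule Ad_adjoint[OF P S T that])
next
  fix c T assume "T \<in> A"
  then show "Ad U V (op_scale c T) = op_scale c (Ad U V T)" using A Ad_scale[OF P] by blast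
qed

lemma star_automorphism_comp:
  assumes \<phi>: "star_automorphism A \<phi>" and \<psi>: "star_automorphism A \<psi>"
  shows "star_automorphism A (\<phi> \<circ> \<psi>)"
proof -
  have "bij_betw \<psi> A A" using \<psi> unfolding star_automorphism_def by blast
  then have in_A: "\<psi> T \<in> A" if "T \<in> A" for T using that by (rule bij_betw_apply)
  show ?thesis
    unfolding star_automorphism_def comp_def
  proof (intro conjI ballI allI impI)
    show "bij_betw (\<lambda>T. \<phi> (\<psi> T)) A A"
      using bij_betw_trans[of \<psi> A A \<phi>] \<phi> \<psi> unfolding star_automorphism_def comp_def by blast
  next
    fix S T assume "S \<in> A" "T \<in> A"
    with in_A \<phi> \<psi> show "\<phi> (\<psi> (op_add S T)) = op_add (\<phi> (\<psi> S)) (\<phi> (\<psi> T))"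
      "\<phi> (\<psi> (op_mult S T)) = op_mult (\<phi> (\<psi> S)) (\<phi> (\<psi> T))"
      unfolding star_automorphism_def by simp_all
    show "is_adjoint (\<phi> (\<psi> T)) (\<phi> (\<psi> S))" if "is_adjoint T S"
      using that \<open>S \<in> A\<close> \<open>T \<in> A\<close> in_A \<phi> \<psi> unfolding star_automorphism_def by blast
  next
    fix c T assume "T \<in> A"
    with in_A \<phi> \<psi> show "\<phi> (\<psi> (op_scale c T)) = op_scale c (\<phi> (\<psi> T))"
      unfolding star_automorphism_def by simp
  qed
qed

lemma is_flow_conj:
  assumes A: "cstar_subalg A" and W: "W \<in> A" "unitary_pair W W" and \<sigma>: "is_flow A \<sigma>"
  shows "is_flow A (\<lambda>t. Ad W W \<circ> \<sigma> t \<circ> Ad W W)"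
proof -
  have bounded: "\<And>T. T \<in> A \<Longrightarrow> bounded_op T" using cstar_bounded[OF A] .
  have W_in: "\<And>T. T \<in> A \<Longrightarrow> Ad W W T \<in> A" using Ad_in_cstar[OF A W(1) W(1)] .
  have W_inv: "\<And>T. T \<in> A \<Longrightarrow> Ad W W (Ad W W T) = T" using Ad_inverse[OF W(2)] bounded by blast
  have aut: "\<And>t. star_automorphism A (\<sigma> t)" using \<sigma> unfolding is_flow_def by blast
  have \<sigma>_in: "\<sigma> t T \<in> A" if "T \<in> A" for t T
  proof -
    have "bij_betw (\<sigma> t) A A" using aut unfolding star_automorphism_def by blast
    then show ?thesis using that by (rule bij_betw_apply)
  qed
  have "star_automorphism A (Ad W W)"
    using star_automorphism_Ad[OF W(2) _ W_in W_in] bounded by blast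
  then have "star_automorphism A (Ad W W \<circ> \<sigma> t \<circ> Ad W W)" for t
    using star_automorphism_comp aut by metis
  moreover have "(Ad W W \<circ> \<sigma> 0 \<circ> Ad W W) T = T" if "T \<in> A" for T
    using \<sigma> that W_in W_inv unfolding is_flow_def by simp
  moreover have "(Ad W W \<circ> \<sigma> (s + t) \<circ> Ad W W) T
      = (Ad W W \<circ> \<sigma> s \<circ> Ad W W) ((Ad W W \<circ> \<sigma> t \<circ> Ad W W) T)" if "T \<in> A" for s t T
    using \<sigma> that W_in W_inv \<sigma>_in unfolding is_flow_def by simp
  moreover have "((\<lambda>t. op_norm (op_diff ((Ad W W \<circ> \<sigma> t \<circ> Ad W W) T) ((Ad W W \<circ> \<sigma> t0 \<circ> Ad W W) T)))
      \<longlongrightarrow> 0) (at t0)" if "T \<in> A" for T t0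
  proof -
    define X where "X = Ad W W T"
    have X: "X \<in> A" unfolding X_def by (rule W_in[OF that])
    have lim: "((\<lambda>t. op_norm (op_diff (\<sigma> t X) (\<sigma> t0 X))) \<longlongrightarrow> 0) (at t0)"
      using \<sigma> X unfolding is_flow_def by blast
    have b: "bounded_op (op_diff (Ad W W (\<sigma> t X)) (Ad W W (\<sigma> t0 X)))" for t
      using \<sigma>_in[OF X] bounded by (intro bounded_op_diff Ad_bounded(1)[OF W(2)]) auto
    have le: "op_norm (op_diff (Ad W W (\<sigma> t X)) (Ad W W (\<sigma> t0 X)))
        \<le> op_norm (op_diff (\<sigma> t X) (\<sigma> t0 X))" for t
      using \<sigma>_in[OF X] bounded by (intro op_norm_Ad_diff_le[OF W(2)]) auto
    from op_norm_tendsto_0_compare[OF b le lim] show ?thesis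
      unfolding comp_def X_def .
  qed
  ultimately show ?thesis unfolding is_flow_def by blast
qed

lemma norm_differentiable_at_Ad:
  assumes P: "unitary_pair U V" and u: "\<And>t. bounded_op (u t)" and d: "norm_differentiable_at u t0"
  shows "norm_differentiable_at (\<lambda>t. Ad U V (u t)) t0"
proof -
  obtain D where D: "bounded_op D"
    and lim: "((\<lambda>h. op_norm (op_diff (op_scale (complex_of_real (1 / h))
                                             (op_diff (u (t0 + h)) (u t0))) D))
                \<longlongrightarrow> 0) (at 0)"
    using d unfolding norm_differentiable_at_def by blast
  define Q where "Q = (\<lambda>h. op_diff (op_scale (complex_of_real (1 / h)) (op_diff (u (t0 + h)) (u t0))) D)"
  have Q: "bounded_op (Q h)" for h unfolding Q_def by (intro bounded_op_diff bounded_op_scale u D)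
  have eq: "Ad U V (Q h) = op_diff (op_scale (complex_of_real (1 / h))
                         (op_diff (Ad U V (u (t0 + h))) (Ad U V (u t0)))) (Ad U V D)" for h
    unfolding Q_def by (simp add: Ad_diff[OF P] Ad_scale[OF P] bounded_op_diff bounded_op_scale u D)
  have "((\<lambda>h. op_norm (Q h)) \<longlongrightarrow> 0) (at 0)" using lim unfolding Q_def .
  from op_norm_tendsto_0_compare[OF Ad_bounded(1)[OF P Q] Ad_bounded(2)[OF P Q] this]
  have "((\<lambda>h. op_norm (Ad U V (Q h))) \<longlongrightarrow> 0) (at 0)" .
  then show ?thesis unfolding norm_differentiable_at_def eq using Ad_bounded(1)[OF P D] by blast
qed

section \<open>Phase flows\<close>

definition mult_op :: "('a \<Rightarrow> complex) \<Rightarrow> 'a op" where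
  "mult_op \<phi> = (\<lambda>g. if g \<in> ell2 then (\<lambda>x. \<phi> x * g x) else (\<lambda>_. 0))"

lemma mult_op_l2norm_le:
  assumes "\<And>x. cmod (\<phi> x) \<le> 1" "g \<in> ell2"
  shows "mult_op \<phi> g \<in> ell2 \<and> l2norm (mult_op \<phi> g) \<le> 1 * l2norm g"
proof (rule ell2I_l2norm_le)
  fix F :: "'a set" assume F: "finite F"
  have "(\<Sum>x\<in>F. (cmod (mult_op \<phi> g x))\<^sup>2) \<le> (\<Sum>x\<in>F. (cmod (g x))\<^sup>2)"
  proof (rule sum_mono)
    fix x
    have "cmod (\<phi> x * g x) \<le> cmod (g x)"
      using assms(1)[of x] by (simp add: norm_mult mult_left_le_one_le)
    then show "(cmod (mult_op \<phi> g x))\<^sup>2 \<le> (cmod (g x))\<^sup>2"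
      using assms(2) by (simp add: mult_op_def power_mono)
  qed
  then show "sqrt (\<Sum>x\<in>F. (cmod (mult_op \<phi> g x))\<^sup>2) \<le> 1 * l2norm g"
    using sqrt_sum_le_l2norm[OF assms(2) F] by (simp add: order_trans[OF real_sqrt_le_mono])
qed

lemma mult_op_bounded:
  assumes "\<And>x. cmod (\<phi> x) \<le> 1"
  shows "bounded_op (mult_op \<phi>)"
proof (rule bounded_opI[where K=1])
  fix g h :: "'a \<Rightarrow> complex" and c assume g: "g \<in> ell2" and h: "h \<in> ell2"
  show "mult_op \<phi> (\<lambda>x. g x + c * h x) = (\<lambda>x. mult_op \<phi> g x + c * mult_op \<phi> h x)"
    using g h by (simp add: mult_op_def ell2_add_scaled algebra_simps)
next
  fix g :: "'a \<Rightarrow> complex" assume g: "g \<in> ell2"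
  show "mult_op \<phi> g \<in> ell2" using mult_op_l2norm_le[of \<phi> g] assms g by blast
  show "l2norm (mult_op \<phi> g) \<le> 1 * l2norm g" using mult_op_l2norm_le[of \<phi> g] assms g by blast
next
  fix g :: "'a \<Rightarrow> complex" assume g: "g \<notin> ell2"
  show "mult_op \<phi> g = (\<lambda>_. 0)" using g by (simp add: mult_op_def)
qed

lemma mult_op_comp:
  assumes "\<And>x. cmod (\<psi> x) \<le> 1"
  shows "mult_op \<phi> (mult_op \<psi> g) = mult_op (\<lambda>x. \<phi> x * \<psi> x) g"
proof (cases "g \<in> ell2")
  case True
  have "mult_op \<psi> g \<in> ell2" using mult_op_l2norm_le[of \<psi> g] assms True by blast
  then show ?thesis using True by (simp add: mult_op_def mult.assoc)
next
  case False then show ?thesis by (simp add: mult_op_def)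
qed

lemma unitary_pair_mult_op:
  assumes u: "\<And>x. cmod (\<phi> x) = 1"
  shows "unitary_pair (mult_op \<phi>) (mult_op (\<lambda>x. cnj (\<phi> x)))"
proof -
  have b1: "bounded_op (mult_op \<phi>)" using u by (intro mult_op_bounded) simp
  have b2: "bounded_op (mult_op (\<lambda>x. cnj (\<phi> x)))" using u by (intro mult_op_bounded) simp
  have e1: "\<phi> x * cnj (\<phi> x) = 1" for x
    using u[of x] by (metis complex_norm_square of_real_1 power_one)
  have i1: "\<forall>g\<in>ell2. mult_op \<phi> (mult_op (\<lambda>x. cnj (\<phi> x)) g) = g"
  proof
    fix g :: "'a \<Rightarrow> complex" assume g: "g \<in> ell2"
    have "mult_op \<phi> (mult_op (\<lambda>x. cnj (\<phi> x)) g) = mult_op (\<lambda>x. \<phi> x * cnj (\<phi> x)) g"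
      by (rule mult_op_comp) (simp add: u)
    then show "mult_op \<phi> (mult_op (\<lambda>x. cnj (\<phi> x)) g) = g" using g by (simp add: mult_op_def e1)
  qed
  have i2: "\<forall>g\<in>ell2. mult_op (\<lambda>x. cnj (\<phi> x)) (mult_op \<phi> g) = g"
  proof
    fix g :: "'a \<Rightarrow> complex" assume g: "g \<in> ell2"
    have "mult_op (\<lambda>x. cnj (\<phi> x)) (mult_op \<phi> g) = mult_op (\<lambda>x. cnj (\<phi> x) * \<phi> x) g"
      by (rule mult_op_comp) (simp add: u)
    then show "mult_op (\<lambda>x. cnj (\<phi> x)) (mult_op \<phi> g) = g" using g e1
      by (simp add: mult_op_def mult.commute)
  qed
  have a: "is_adjoint (mult_op \<phi>) (mult_op (\<lambda>x. cnj (\<phi> x)))"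
    unfolding is_adjoint_def
  proof (intro ballI)
    fix g h :: "'a \<Rightarrow> complex" assume g: "g \<in> ell2" and h: "h \<in> ell2"
    show "l2inner (mult_op \<phi> g) h = l2inner g (mult_op (\<lambda>x. cnj (\<phi> x)) h)"
      using g h by (simp add: mult_op_def l2inner_def algebra_simps)
  qed
  show ?thesis unfolding unitary_pair_def using b1 b2 i1 i2 a by blast
qed

definition phase_op :: "('a \<Rightarrow> int) \<Rightarrow> real \<Rightarrow> 'a op" where
  "phase_op h t = mult_op (\<lambda>x. cis (t * of_int (h x)))"

definition phase_flow :: "('a \<Rightarrow> int) \<Rightarrow> real \<Rightarrow> 'a op \<Rightarrow> 'a op" where
  "phase_flow h t = Ad (phase_op h t) (phase_op h (-t))"

lemma unitary_pair_phase_op: "unitary_pair (phase_op h t) (phase_op h (-t))"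
proof -
  have "unitary_pair (mult_op (\<lambda>x. cis (t * of_int (h x)))) (mult_op (\<lambda>x. cnj (cis (t * of_int (h x)))))"
    by (rule unitary_pair_mult_op) simp
  then show ?thesis by (simp add: phase_op_def cis_cnj)
qed

lemma phase_op_bounded: "bounded_op (phase_op h t)"
  using unitary_pair_phase_op unfolding unitary_pair_def by blast

lemma phase_op_phase_op: "phase_op h s (phase_op h t g) = phase_op h (s + t) g"
  by (simp add: phase_op_def mult_op_comp[of "\<lambda>x. cis (t * of_int (h x))"] cis_mult distrib_right)

lemma phase_flow_0: "bounded_op T \<Longrightarrow> phase_flow h 0 T = T"
proof -
  assume T: "bounded_op T"
  have "phase_flow h 0 T = Ad (phase_op h 0) (phase_op h 0) T" by (simp add: phase_flow_def)
  also have "phase_op h 0 = mult_op (\<lambda>x. 1)" by (simp add: phase_op_def)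
  finally have e: "phase_flow h 0 T = Ad (mult_op (\<lambda>x. 1)) (mult_op (\<lambda>x. 1)) T" .
  show ?thesis
  proof
    fix g show "phase_flow h 0 T g = T g"
      unfolding e using bounded_op_ell2[OF T, of g] bounded_op_apply_zero[OF T]
          bounded_op_outside[OF T, of g]
      by (cases "g \<in> ell2") (auto simp: Ad_def mult_op_def)
  qed
qed

lemma phase_flow_bounded: "bounded_op T \<Longrightarrow> bounded_op (phase_flow h t T)"
  unfolding phase_flow_def by (rule Ad_bounded(1)[OF unitary_pair_phase_op])

lemma op_norm_phase_flow_le:
  "bounded_op T \<Longrightarrow> op_norm (phase_flow h t T) \<le> op_norm T"
  unfolding phase_flow_def by (rule Ad_bounded(2)[OF unitary_pair_phase_op])

lemma phase_flow_add:
  "bounded_op S \<Longrightarrow> bounded_op T \<Longrightarrow>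
    phase_flow h t (op_add S T) = op_add (phase_flow h t S) (phase_flow h t T)"
  unfolding phase_flow_def by (rule Ad_add[OF unitary_pair_phase_op])

lemma phase_flow_scale:
  "bounded_op T \<Longrightarrow> phase_flow h t (op_scale c T) = op_scale c (phase_flow h t T)"
  unfolding phase_flow_def by (rule Ad_scale[OF unitary_pair_phase_op])

lemma phase_flow_mult:
  "bounded_op S \<Longrightarrow> bounded_op T \<Longrightarrow>
    phase_flow h t (op_mult S T) = op_mult (phase_flow h t S) (phase_flow h t T)"
  unfolding phase_flow_def by (rule Ad_mult[OF unitary_pair_phase_op])

lemma phase_flow_zero: "phase_flow h t op_zero = op_zero"
  unfolding phase_flow_def by (rule Ad_zero[OF unitary_pair_phase_op])

lemma phase_flow_adjoint:
  "bounded_op S \<Longrightarrow> bounded_op T \<Longrightarrow> is_adjoint T S \<Longrightarrow>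
    is_adjoint (phase_flow h t T) (phase_flow h t S)"
  unfolding phase_flow_def by (rule Ad_adjoint[OF unitary_pair_phase_op])

lemma phase_flow_phase_flow: "phase_flow h s (phase_flow h t T) = phase_flow h (s + t) T"
proof -
  have "op_mult (phase_op h s) (phase_op h t) = phase_op h (s + t)"
    by (simp add: op_mult_def phase_op_phase_op fun_eq_iff)
  moreover have "op_mult (phase_op h (-t)) (phase_op h (-s)) = phase_op h (-(s + t))"
    by (simp add: op_mult_def phase_op_phase_op fun_eq_iff algebra_simps)
  ultimately show ?thesis unfolding phase_flow_def Ad_comp by simp
qed

lemma op_norm_phase_flow_diff_le:
  "bounded_op S \<Longrightarrow> bounded_op T \<Longrightarrow>
     op_norm (op_diff (phase_flow h t S) (phase_flow h t T)) \<le> op_norm (op_diff S T)"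
  unfolding phase_flow_def by (rule op_norm_Ad_diff_le[OF unitary_pair_phase_op])

lemma phase_flow_orbit_diff_le:
  assumes T: "bounded_op T" and S: "bounded_op S"
  shows "op_norm (op_diff (phase_flow h t T) (phase_flow h t0 T))
           \<le> op_norm (op_diff (phase_flow h t S) (phase_flow h t0 S)) + 2 * op_norm (op_diff S T)"
proof -
  have b: "bounded_op (phase_flow h t T)" "bounded_op (phase_flow h t S)"
    "bounded_op (phase_flow h t0 S)" "bounded_op (phase_flow h t0 T)"
    by (intro phase_flow_bounded T S)+
  have "op_norm (op_diff (phase_flow h t T) (phase_flow h t0 T))
      \<le> op_norm (op_diff (phase_flow h t T) (phase_flow h t S))
        + op_norm (op_diff (phase_flow h t S) (phase_flow h t0 T))"
    by (rule op_norm_triangle[OF b(1,2,4)])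
  also have "op_norm (op_diff (phase_flow h t S) (phase_flow h t0 T))
      \<le> op_norm (op_diff (phase_flow h t S) (phase_flow h t0 S))
        + op_norm (op_diff (phase_flow h t0 S) (phase_flow h t0 T))"
    by (rule op_norm_triangle[OF b(2,3,4)])
  also have "op_norm (op_diff (phase_flow h t T) (phase_flow h t S)) \<le> op_norm (op_diff S T)"
    using op_norm_phase_flow_diff_le[OF T S] op_norm_diff_sym[OF T S] by simp
  also have "op_norm (op_diff (phase_flow h t0 S) (phase_flow h t0 T)) \<le> op_norm (op_diff S T)"
    by (rule op_norm_phase_flow_diff_le[OF S T])
  finally show ?thesis by simp
qed

lemma op_sum_pt_op_level_sets:
  assumes inj: "inj_on f D" and K: "finite K" and k: "\<And>x. x \<in> D \<Longrightarrow> k x \<in> K" and g: "g \<in> ell2"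
  shows "op_sum K c (\<lambda>j. pt_op {x\<in>D. k x = j} f) g
           = (\<lambda>y. if y \<in> f ` D then c (k (inv_into D f y)) * g (inv_into D f y) else 0)"
proof
  fix y
  show "op_sum K c (\<lambda>j. pt_op {x\<in>D. k x = j} f) g y
          = (if y \<in> f ` D then c (k (inv_into D f y)) * g (inv_into D f y) else 0)"
  proof (cases "y \<in> f ` D")
    case False
    then show ?thesis using g by (auto simp: op_sum_def pt_op_def intro!: sum.neutral)
  next
    case True
    then obtain x where x: "x \<in> D" "y = f x" by blast
    have level: "y \<in> f ` {x\<in>D. k x = j} \<longleftrightarrow> j = k x" for j
    proof
      assume "y \<in> f ` {x\<in>D. k x = j}"
      then obtain x' where x': "x' \<in> D" "k x' = j" "f x' = f x" using x by auto
      then have "x' = x" using inj_on_eq_iff[OF inj x'(1) x(1)] by simp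
      then show "j = k x" using x' by simp
    qed (use x in blast)
    have inv: "inv_into {x'\<in>D. k x' = k x} f y = x"
      using x by (intro inv_into_f_eq inj_on_subset[OF inj]) auto
    have "op_sum K c (\<lambda>j. pt_op {x\<in>D. k x = j} f) g y = c (k x) * g x"
      using g K k[OF x(1)] by (simp add: op_sum_def pt_op_def level inv if_distrib sum.delta'
          cong: if_cong)
    then show ?thesis using x inj by (simp add: inv_into_f_f)
  qed
qed

lemma phase_flow_pt_op_apply:
  assumes g: "g \<in> ell2"
  shows "phase_flow h t (pt_op D f) g
           = (\<lambda>y. if y \<in> f ` D then cis (t * of_int (h y - h (inv_into D f y)))
               * g (inv_into D f y) else 0)"
proof -
  have "phase_op h (-t) g \<in> ell2" by (rule bounded_op_ell2[OF phase_op_bounded])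
  moreover have "pt_op D f (phase_op h (-t) g) \<in> ell2" by (rule bounded_op_ell2[OF bounded_pt_op])
  moreover have "cis (t * of_int a) * (cis (- t * of_int b) * z)
      = cis (t * of_int (a - b)) * z" for a b z
  proof -
    have "cis (t * of_int a) * cis (- t * of_int b) = cis (t * of_int (a - b))"
      by (simp add: cis_mult algebra_simps)
    then show ?thesis by (metis mult.assoc)
  qed
  ultimately show ?thesis
    using g by (simp add: phase_flow_def Ad_def phase_op_def mult_op_def pt_op_def fun_eq_iff)
qed

lemma phase_flow_pt_op:
  assumes M: "\<And>x. x \<in> D \<Longrightarrow> \<bar>h (f x) - h x\<bar> \<le> M" and inj: "inj_on f D"
  shows "phase_flow h t (pt_op D f)
           = op_sum {-M..M} (\<lambda>k. cis (t * of_int k)) (\<lambda>k. pt_op {x\<in>D. h (f x) - h x = k} f)"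
proof
  fix g
  show "phase_flow h t (pt_op D f) g
          = op_sum {-M..M} (\<lambda>k. cis (t * of_int k)) (\<lambda>k. pt_op {x\<in>D. h (f x) - h x = k} f) g"
  proof (cases "g \<in> ell2")
    case False
    then show ?thesis
      by (simp add: phase_flow_def Ad_def op_sum_def pt_op_def phase_op_def mult_op_def)
  next
    case g: True
    have "\<And>x. x \<in> D \<Longrightarrow> h (f x) - h x \<in> {-M..M}" using M by (fastforce simp: abs_le_iff)
    from op_sum_pt_op_level_sets[OF inj finite_atLeastAtMost_int this g]
    show ?thesis by (simp add: phase_flow_pt_op_apply[OF g] f_inv_into_f fun_eq_iff)
  qed
qed

definition bornologous :: "('a::metric_space \<Rightarrow> int) \<Rightarrow> bool" where
  "bornologous h \<longleftrightarrow> (\<forall>R. \<exists>M. \<forall>x y. dist x y \<le> R \<longrightarrow> \<bar>h x - h y\<bar> \<le> M)"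

lemma bornologous_partial_translation_bound:
  assumes "bornologous h" "partial_translation D f"
  obtains M where "\<And>x. x \<in> D \<Longrightarrow> \<bar>h (f x) - h x\<bar> \<le> M"
proof -
  obtain R where R: "\<forall>x\<in>D. dist x (f x) \<le> R" using assms(2) unfolding partial_translation_def by blast
  obtain M where M: "\<forall>x y. dist x y \<le> R \<longrightarrow> \<bar>h x - h y\<bar> \<le> M"
    using assms(1) unfolding bornologous_def by blast
  have "\<And>x. x \<in> D \<Longrightarrow> \<bar>h (f x) - h x\<bar> \<le> M" using R M by (metis dist_commute)
  then show ?thesis using that by blast
qed

lemma phase_flow_pt_op_eq_op_sum:
  assumes h: "bornologous h" and pt: "partial_translation D f"
  obtains M where "\<And>t. phase_flow h t (pt_op D f)
    = op_sum {-M..M} (\<lambda>k. cis (t * of_int k)) (\<lambda>k. pt_op {x\<in>D. h (f x) - h x = k} f)"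
proof -
  obtain M where "\<And>x. x \<in> D \<Longrightarrow> \<bar>h (f x) - h x\<bar> \<le> M"
    using bornologous_partial_translation_bound[OF h pt] by blast
  moreover have "inj_on f D" using pt unfolding partial_translation_def by blast
  ultimately show ?thesis using that phase_flow_pt_op by blast
qed

lemma phase_flow_preserves_uniform_roe:
  assumes h: "bornologous h" and T: "T \<in> uniform_roe"
  shows "phase_flow h t T \<in> uniform_roe"
  unfolding phase_flow_def
proof (rule Ad_preserves_uniform_roe[OF unitary_pair_phase_op _ T])
  fix D :: "'a set" and f assume pt: "partial_translation D f"
  obtain M where "phase_flow h t (pt_op D f)
    = op_sum {-M..M} (\<lambda>k. cis (t * of_int k)) (\<lambda>k. pt_op {x\<in>D. h (f x) - h x = k} f)"
    using phase_flow_pt_op_eq_op_sum[OF h pt] by blast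
  moreover have "pt_op {x\<in>D. h (f x) - h x = k} f \<in> uniform_roe" for k
    by (intro pt_op_in_uniform_roe partial_translation_subset[OF pt]) blast
  ultimately show "Ad (phase_op h t) (phase_op h (- t)) (pt_op D f) \<in> uniform_roe"
    unfolding phase_flow_def by (simp add: op_sum_in_cstar[OF cstar_subalg_uniform_roe])
qed

definition phase_continuous :: "('a \<Rightarrow> int) \<Rightarrow> 'a op \<Rightarrow> bool" where
  "phase_continuous h T \<longleftrightarrow>
     (\<forall>t0. ((\<lambda>t. op_norm (op_diff (phase_flow h t T) (phase_flow h t0 T))) \<longlongrightarrow> 0) (at t0))"

lemma phase_continuous_pt_op:
  assumes h: "bornologous h" and pt: "partial_translation D f"
  shows "phase_continuous h (pt_op D f)"
  unfolding phase_continuous_def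
proof
  fix t0 :: real
  obtain M where M: "\<And>t. phase_flow h t (pt_op D f)
    = op_sum {-M..M} (\<lambda>k. cis (t * of_int k)) (\<lambda>k. pt_op {x\<in>D. h (f x) - h x = k} f)"
    using phase_flow_pt_op_eq_op_sum[OF h pt] by blast
  define P where "P = (\<lambda>k. pt_op {x\<in>D. h (f x) - h x = k} f)"
  define c where "c = (\<lambda>t k. cis (t * of_int k) - cis (t0 * of_int k))"
  have "((\<lambda>t. \<Sum>k\<in>{-M..M}. cmod (c t k)) \<longlongrightarrow> (\<Sum>k\<in>{-M..M}. cmod (c t0 k))) (at t0)"
    unfolding c_def by (intro tendsto_intros)
  then have lim: "((\<lambda>t. \<Sum>k\<in>{-M..M}. cmod (c t k)) \<longlongrightarrow> 0) (at t0)" by (simp add: c_def)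
  have diff: "op_diff (phase_flow h t (pt_op D f)) (phase_flow h t0 (pt_op D f))
      = op_sum {-M..M} (c t) P" for t
    unfolding M by (simp add: op_sum_diff c_def P_def)
  have sum: "bounded_op (op_sum {-M..M} (c t) P)
      \<and> op_norm (op_sum {-M..M} (c t) P) \<le> (\<Sum>k\<in>{-M..M}. cmod (c t k) * op_norm (P k))" for t
    by (rule op_sum_bounded) (auto simp: P_def intro: bounded_pt_op)
  have "(\<Sum>k\<in>{-M..M}. cmod (c t k) * op_norm (P k)) \<le> (\<Sum>k\<in>{-M..M}. cmod (c t k))" for t
    unfolding P_def by (intro sum_mono mult_left_le op_norm_pt_op) auto
  with sum have le: "op_norm (op_sum {-M..M} (c t) P) \<le> (\<Sum>k\<in>{-M..M}. cmod (c t k))" for t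
    by (meson order_trans)
  show "((\<lambda>t. op_norm (op_diff (phase_flow h t (pt_op D f)) (phase_flow h t0 (pt_op D f)))) \<longlongrightarrow> 0) (at t0)"
    unfolding diff by (rule op_norm_tendsto_0_compare[OF _ le lim]) (use sum in blast)
qed

lemma phase_continuous_zero: "phase_continuous h op_zero"
proof -
  have "op_diff (op_zero :: 'a op) op_zero = op_zero" by (simp add: op_diff_def op_zero_def)
  then show ?thesis unfolding phase_continuous_def phase_flow_zero by simp
qed

lemma phase_continuous_add:
  assumes S: "bounded_op S" and T: "bounded_op T"
    and "phase_continuous h S" "phase_continuous h T"
  shows "phase_continuous h (op_add S T)"
  unfolding phase_continuous_def
proof
  fix t0 :: real
  let ?d = "\<lambda>X t. op_diff (phase_flow h t X) (phase_flow h t0 X)"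
  have lim: "((\<lambda>t. op_norm (?d S t) + op_norm (?d T t)) \<longlongrightarrow> 0) (at t0)"
    using assms(3,4) unfolding phase_continuous_def by (intro tendsto_add_zero) auto
  have b: "bounded_op (?d S t)" "bounded_op (?d T t)" for t
    by (intro bounded_op_diff phase_flow_bounded S T)+
  have "?d (op_add S T) t = op_add (?d S t) (?d T t)" for t
    unfolding phase_flow_add[OF S T] by (simp add: op_add_def op_diff_def fun_eq_iff)
  then show "((\<lambda>t. op_norm (?d (op_add S T) t)) \<longlongrightarrow> 0) (at t0)"
    using bounded_op_add[OF b] by (intro op_norm_tendsto_0_compare[OF _ _ lim]) auto
qed

lemma phase_continuous_scale:
  assumes T: "bounded_op T" and "phase_continuous h T"
  shows "phase_continuous h (op_scale c T)"
  unfolding phase_continuous_def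
proof
  fix t0 :: real
  let ?d = "\<lambda>X t. op_diff (phase_flow h t X) (phase_flow h t0 X)"
  have lim: "((\<lambda>t. cmod c * op_norm (?d T t)) \<longlongrightarrow> 0) (at t0)"
    using assms(2) unfolding phase_continuous_def by (intro tendsto_mult_right_zero) auto
  have b: "bounded_op (?d T t)" for t
    by (intro bounded_op_diff phase_flow_bounded T)
  have "?d (op_scale c T) t = op_scale c (?d T t)" for t
    unfolding phase_flow_scale[OF T] by (simp add: op_scale_def op_diff_def fun_eq_iff algebra_simps)
  then show "((\<lambda>t. op_norm (?d (op_scale c T) t)) \<longlongrightarrow> 0) (at t0)"
    using bounded_op_scale[OF b] by (intro op_norm_tendsto_0_compare[OF _ _ lim]) auto
qed

lemma phase_continuous_mult:
  assumes S: "bounded_op S" and T: "bounded_op T"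
    and "phase_continuous h S" "phase_continuous h T"
  shows "phase_continuous h (op_mult S T)"
  unfolding phase_continuous_def
proof
  fix t0 :: real
  let ?d = "\<lambda>X t. op_diff (phase_flow h t X) (phase_flow h t0 X)"
  have lim: "((\<lambda>t. op_norm S * op_norm (?d T t) + op_norm (?d S t) * op_norm T) \<longlongrightarrow> 0) (at t0)"
    using assms(3,4) unfolding phase_continuous_def
    by (intro tendsto_add_zero tendsto_mult_right_zero tendsto_mult_left_zero) auto
  have le: "op_norm (?d (op_mult S T) t)
      \<le> op_norm S * op_norm (?d T t) + op_norm (?d S t) * op_norm T" for t
  proof -
    have "op_norm (?d (op_mult S T) t)
        \<le> op_norm (phase_flow h t S) * op_norm (?d T t) + op_norm (?d S t) * op_norm (phase_flow h t0 T)"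
      unfolding phase_flow_mult[OF S T] by (intro op_norm_mult_diff_le phase_flow_bounded S T)
    also have "\<dots> \<le> op_norm S * op_norm (?d T t) + op_norm (?d S t) * op_norm T"
      using op_norm_phase_flow_le[OF S] op_norm_phase_flow_le[OF T]
      by (intro add_mono mult_right_mono mult_left_mono op_norm_nonneg bounded_op_diff
          phase_flow_bounded S T)
        auto
    finally show ?thesis .
  qed
  show "((\<lambda>t. op_norm (?d (op_mult S T) t)) \<longlongrightarrow> 0) (at t0)"
    by (rule op_norm_tendsto_0_compare[OF _ le lim]) (intro bounded_op_diff phase_flow_bounded
        bounded_op_mult S T)
qed

lemma phase_continuous_adjoint:
  assumes S: "bounded_op S" and T: "bounded_op T" and a: "is_adjoint T S" and cT: "phase_continuous h T"
  shows "phase_continuous h S"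
proof -
  have "op_norm (op_diff (phase_flow h t S) (phase_flow h t0 S))
          = op_norm (op_diff (phase_flow h t T) (phase_flow h t0 T))" for t t0
  proof (rule op_norm_adjoint)
    show "bounded_op (op_diff (phase_flow h t T) (phase_flow h t0 T))"
      "bounded_op (op_diff (phase_flow h t S) (phase_flow h t0 S))"
      by (intro bounded_op_diff phase_flow_bounded S T)+
    show "is_adjoint (op_diff (phase_flow h t T) (phase_flow h t0 T)) (op_diff (phase_flow h t S)
        (phase_flow h t0 S))"
      by (intro is_adjoint_diff phase_flow_bounded phase_flow_adjoint S T a)
  qed
  then show ?thesis using cT unfolding phase_continuous_def by simp
qed

lemma phase_continuous_limit:
  assumes T: "bounded_op T" and s: "\<And>n. bounded_op (s n)" and cs: "\<And>n. phase_continuous h (s n)"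
    and lim: "(\<lambda>n. op_norm (op_diff (s n) T)) \<longlonglongrightarrow> 0"
  shows "phase_continuous h T"
  unfolding phase_continuous_def
proof
  fix t0 :: real
  show "((\<lambda>t. op_norm (op_diff (phase_flow h t T) (phase_flow h t0 T))) \<longlongrightarrow> 0) (at t0)"
  proof (rule tendstoI)
    fix e :: real assume e: "e > 0"
    have "\<forall>\<^sub>F n in sequentially. op_norm (op_diff (s n) T) < e / 3"
      using order_tendstoD(2)[OF lim, of "e/3"] e by simp
    then obtain n where n: "op_norm (op_diff (s n) T) < e / 3"
      by (auto simp: eventually_sequentially)
    have "((\<lambda>t. op_norm (op_diff (phase_flow h t (s n)) (phase_flow h t0 (s n)))) \<longlongrightarrow> 0) (at t0)"
      using cs[of n] unfolding phase_continuous_def by blast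
    from order_tendstoD(2)[OF this, of "e/3"] e
    have "\<forall>\<^sub>F t in at t0. op_norm (op_diff (phase_flow h t (s n)) (phase_flow h t0 (s n))) < e / 3"
      by simp
    then show "\<forall>\<^sub>F t in at t0. dist (op_norm (op_diff (phase_flow h t T) (phase_flow h t0 T))) 0 < e"
    proof (rule eventually_mono)
      fix t assume "op_norm (op_diff (phase_flow h t (s n)) (phase_flow h t0 (s n))) < e / 3"
      then have "op_norm (op_diff (phase_flow h t T) (phase_flow h t0 T)) < e"
        using phase_flow_orbit_diff_le[OF T s, of h t t0 n] n by linarith
      moreover have "0 \<le> op_norm (op_diff (phase_flow h t T) (phase_flow h t0 T))"
        by (intro op_norm_nonneg bounded_op_diff phase_flow_bounded T)
      ultimately show "dist (op_norm (op_diff (phase_flow h t T) (phase_flow h t0 T))) 0 < e"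
        by (simp add: dist_real_def)
    qed
  qed
qed

lemma phase_continuous_uniform_roe:
  assumes h: "bornologous h" and T: "T \<in> uniform_roe"
  shows "phase_continuous h T"
proof -
  define C where "C = {T. bounded_op T \<and> phase_continuous h T}"
  have "cstar_subalg C"
  proof (rule cstar_subalgI)
    show "C \<subseteq> {T. bounded_op T}" unfolding C_def by blast
    show "op_zero \<in> C" unfolding C_def using phase_continuous_zero by simp
    show "op_add S T \<in> C" "op_mult S T \<in> C" if "S \<in> C" "T \<in> C" for S T
      using that bounded_op_add(1) bounded_op_mult(1) phase_continuous_add phase_continuous_mult
      unfolding C_def by auto
    show "op_scale c T \<in> C" if "T \<in> C" for c T
      using that bounded_op_scale(1) phase_continuous_scale unfolding C_def by auto
    show "\<exists>S\<in>C. is_adjoint T S" if "T \<in> C" for T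
      using that adj_bounded adj_is_adjoint phase_continuous_adjoint unfolding C_def by blast
    show "T \<in> C" if "bounded_op T" "\<And>n. s n \<in> C" "(\<lambda>n. op_norm (op_diff (s n) T)) \<longlonglongrightarrow> 0" for T s
      using that phase_continuous_limit[OF that(1) _ _ that(3)] unfolding C_def by blast
  qed
  moreover have "pt_ops \<subseteq> C" unfolding C_def using bounded_pt_op phase_continuous_pt_op[OF h] by blast
  ultimately show ?thesis using uniform_roe_least T unfolding C_def by blast
qed

lemma is_flow_phase_flow:
  assumes h: "bornologous h"
  shows "is_flow uniform_roe (phase_flow h)"
proof -
  have "star_automorphism uniform_roe (phase_flow h t)" for t
    unfolding phase_flow_def
  proof (rule star_automorphism_Ad[OF unitary_pair_phase_op])
    show "uniform_roe \<subseteq> {T. bounded_op T}" using uniform_roe_bounded by blast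
    show "Ad (phase_op h t) (phase_op h (-t)) T \<in> uniform_roe" if "T \<in> uniform_roe" for T
      using phase_flow_preserves_uniform_roe[OF h that] unfolding phase_flow_def .
    show "Ad (phase_op h (-t)) (phase_op h t) T \<in> uniform_roe" if "T \<in> uniform_roe" for T
      using phase_flow_preserves_uniform_roe[OF h that, of "-t"] unfolding phase_flow_def by simp
  qed
  moreover have "phase_flow h 0 T = T" if "T \<in> uniform_roe" for T
    using phase_flow_0 uniform_roe_bounded that by blast
  moreover have "phase_flow h (s + t) T = phase_flow h s (phase_flow h t T)" for s t T
    by (simp add: phase_flow_phase_flow)
  moreover have "((\<lambda>t. op_norm (op_diff (phase_flow h t T) (phase_flow h t0 T))) \<longlongrightarrow> 0) (at t0)"
    if "T \<in> uniform_roe" for T t0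
    using phase_continuous_uniform_roe[OF h that] unfolding phase_continuous_def by blast
  ultimately show ?thesis unfolding is_flow_def by blast
qed

lemma has_vector_derivative_difference_quotient:
  fixes f :: "real \<Rightarrow> 'a::real_normed_vector"
  assumes "(f has_vector_derivative f') (at x)"
  shows "((\<lambda>h. (1 / h) *\<^sub>R (f (x + h) - f x)) \<longlongrightarrow> f') (at 0)"
proof -
  have "((\<lambda>y. norm (f y - f x - (y - x) *\<^sub>R f') / norm (y - x)) \<longlongrightarrow> 0) (at x)"
    using assms unfolding has_vector_derivative_def has_derivative_iff_norm by blast
  from LIM_offset_zero[OF this]
  have "((\<lambda>h. norm (f (x + h) - f x - h *\<^sub>R f') / norm h) \<longlongrightarrow> 0) (at 0)"
    by simp
  moreover have "\<forall>\<^sub>F h in at 0. norm (f (x + h) - f x - h *\<^sub>R f') / norm h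
                                  = norm ((1 / h) *\<^sub>R (f (x + h) - f x) - f')"
  proof (rule eventually_mono[OF eventually_at_filter[THEN iffD2]])
    fix h :: real assume "h \<noteq> 0"
    then have "(1 / h) *\<^sub>R (f (x + h) - f x) - f' = (1 / h) *\<^sub>R (f (x + h) - f x - h *\<^sub>R f')"
      by (simp add: scaleR_diff_right)
    then show "norm (f (x + h) - f x - h *\<^sub>R f') / norm h = norm ((1 / h) *\<^sub>R (f (x + h) - f x) - f')"
      by (simp add: divide_inverse mult.commute)
  qed simp
  ultimately have "((\<lambda>h. norm ((1 / h) *\<^sub>R (f (x + h) - f x) - f')) \<longlongrightarrow> 0) (at 0)"
    by (rule Lim_transform_eventually)
  then show ?thesis by (simp only: tendsto_norm_zero_iff LIM_zero_iff)
qed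

lemma cis_difference_quotient:
  "((\<lambda>s. complex_of_real (1 / s) * (cis ((t0 + s) * a) - cis (t0 * a)))
      \<longlongrightarrow> \<i> * complex_of_real a * cis (t0 * a))
     (at 0)"
proof -
  have "((\<lambda>s. cis (s * a)) has_derivative (\<lambda>s. (s * a) *\<^sub>R (\<i> * cis (t0 * a)))) (at t0)"
    by (auto intro!: derivative_eq_intros)
  then have "((\<lambda>s. cis (s * a)) has_vector_derivative (a *\<^sub>R (\<i> * cis (t0 * a)))) (at t0)"
    unfolding has_vector_derivative_def by (simp add: mult.commute)
  from has_vector_derivative_difference_quotient[OF this] show ?thesis
    by (simp add: scaleR_conv_of_real mult_ac)
qed

lemma phase_flow_apply_delta:
  assumes T: "bounded_op T"
  shows "phase_flow h t T (delta v) y = cis (t * of_int (h y - h v)) * T (delta v) y"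
proof -
  have "phase_op h (-t) (delta v) = (\<lambda>x. cis (- t * of_int (h v)) * delta v x)"
    by (simp add: phase_op_def mult_op_def fun_eq_iff) (simp add: delta_def)
  then have "T (phase_op h (-t) (delta v)) = (\<lambda>x. cis (- t * of_int (h v)) * T (delta v) x)"
    using bounded_op_apply_scale[OF T ell2_delta] by simp
  moreover have "T (phase_op h (-t) (delta v)) \<in> ell2" by (rule bounded_op_ell2[OF T])
  moreover have "cis (t * of_int (h y)) * cis (- t * of_int (h v)) = cis (t * of_int (h y - h v))"
    by (simp add: cis_mult algebra_simps)
  ultimately show ?thesis
    by (simp add: phase_flow_def Ad_def phase_op_def mult_op_def mult.assoc[symmetric])
qed

text \<open>The derivative at \<open>t0\<close> has the matrix entries \<open>i (h y - h v) e^(i t0 (h y - h v)) T_yv\<close>,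
  and matrix entries of a bounded operator are bounded by its norm.\<close>

lemma phase_flow_differentiable_entry_bound:
  assumes T: "bounded_op T" and d: "norm_differentiable_at (\<lambda>t. phase_flow h t T) t0"
  obtains C where "\<And>v y. \<bar>real_of_int (h y - h v)\<bar> * cmod (T (delta v) y) \<le> C"
proof -
  obtain D where D: "bounded_op D"
    and lim: "((\<lambda>s. op_norm (op_diff (op_scale (complex_of_real (1 / s))
                (op_diff (phase_flow h (t0 + s) T) (phase_flow h t0 T))) D)) \<longlongrightarrow> 0) (at 0)"
    using d unfolding norm_differentiable_at_def by blast
  have "\<bar>real_of_int (h y - h v)\<bar> * cmod (T (delta v) y) \<le> op_norm D" for v y
  proof -
    define a where "a = real_of_int (h y - h v)"
    define Q where "Q = (\<lambda>s. op_diff (op_scale (complex_of_real (1 / s))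
                            (op_diff (phase_flow h (t0 + s) T) (phase_flow h t0 T))) D)"
    have Q: "bounded_op (Q s)" for s
      unfolding Q_def by (intro bounded_op_diff bounded_op_scale phase_flow_bounded T D)
    have "((\<lambda>s. op_norm (Q s)) \<longlongrightarrow> 0) (at 0)" using lim unfolding Q_def .
    then have "((\<lambda>s. Q s (delta v) y) \<longlongrightarrow> 0) (at 0)"
      by (rule Lim_null_comparison[OF always_eventually, rotated])
        (simp add: norm_entry_le_op_norm[OF Q])
    moreover have "Q s (delta v) y
        = complex_of_real (1 / s) * (cis ((t0 + s) * a) - cis (t0 * a)) * T (delta v) y
          - D (delta v) y" for s
      unfolding Q_def a_def
      by (simp add: op_diff_def op_scale_def phase_flow_apply_delta[OF T] algebra_simps)
    ultimately have "((\<lambda>s. complex_of_real (1 / s) * (cis ((t0 + s) * a) - cis (t0 * a)) * T (delta v) y)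
                      \<longlongrightarrow> D (delta v) y) (at 0)"
      by (simp add: LIM_zero_iff)
    moreover have "((\<lambda>s. complex_of_real (1 / s) * (cis ((t0 + s) * a) - cis (t0 * a)) * T (delta v) y)
                      \<longlongrightarrow> \<i> * complex_of_real a * cis (t0 * a) * T (delta v) y) (at 0)"
      by (intro tendsto_mult_right cis_difference_quotient)
    ultimately have "D (delta v) y = \<i> * complex_of_real a * cis (t0 * a) * T (delta v) y"
      using tendsto_unique[OF trivial_limit_at] by blast
    then have "cmod (D (delta v) y) = \<bar>a\<bar> * cmod (T (delta v) y)"
      by (simp add: norm_mult)
    then show ?thesis using norm_entry_le_op_norm[OF D, of v y] unfolding a_def by simp
  qed
  then show ?thesis using that by blast
qed

lemma conj_phase_flow_differentiable_entry_bound: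
  assumes W: "unitary_pair W W" and T: "bounded_op T"
    and d: "norm_differentiable_at (\<lambda>t. (Ad W W \<circ> phase_flow h t \<circ> Ad W W) T) t0"
  obtains C where "\<And>v y. \<bar>real_of_int (h y - h v)\<bar> * cmod (Ad W W T (delta v) y) \<le> C"
proof -
  have E: "bounded_op (Ad W W T)" by (rule Ad_bounded(1)[OF W T])
  have "norm_differentiable_at (\<lambda>t. Ad W W ((Ad W W \<circ> phase_flow h t \<circ> Ad W W) T)) t0"
    by (rule norm_differentiable_at_Ad[OF W _ d]) (simp add: Ad_bounded(1)[OF W] phase_flow_bounded E)
  moreover have "Ad W W ((Ad W W \<circ> phase_flow h t \<circ> Ad W W) T) = phase_flow h t (Ad W W T)" for t
    using Ad_inverse[OF W phase_flow_bounded[OF E]] by simp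
  ultimately have "norm_differentiable_at (\<lambda>t. phase_flow h t (Ad W W T)) t0" by simp
  then show ?thesis using that by (rule phase_flow_differentiable_entry_bound[OF E])
qed

section \<open>Rank-one operators and reflections\<close>

definition rank_one :: "('a \<Rightarrow> complex) \<Rightarrow> 'a op" where
  "rank_one \<xi> = (\<lambda>g. if g \<in> ell2 then (\<lambda>x. l2inner \<xi> g * \<xi> x) else (\<lambda>_. 0))"

lemma rank_one_bounded:
  assumes xi: "\<xi> \<in> ell2"
  shows "bounded_op (rank_one \<xi>)" "op_norm (rank_one \<xi>) \<le> l2norm \<xi> * l2norm \<xi>"
proof -
  have b: "rank_one \<xi> g \<in> ell2 \<and> l2norm (rank_one \<xi> g)
      \<le> (l2norm \<xi> * l2norm \<xi>) * l2norm g" if g: "g \<in> ell2" for g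
  proof
    show "rank_one \<xi> g \<in> ell2" using g xi by (simp add: rank_one_def ell2_scale)
    have "l2norm (rank_one \<xi> g) = cmod (l2inner \<xi> g) * l2norm \<xi>" using g
      by (simp add: rank_one_def l2norm_scale)
    also have "\<dots> \<le> (l2norm \<xi> * l2norm g) * l2norm \<xi>"
      by (rule mult_right_mono[OF l2inner_cauchy_schwarz[OF xi g] l2norm_nonneg])
    finally show "l2norm (rank_one \<xi> g) \<le> (l2norm \<xi> * l2norm \<xi>) * l2norm g" by (simp add: algebra_simps)
  qed
  show "bounded_op (rank_one \<xi>)"
  proof (rule bounded_opI[where K="l2norm \<xi> * l2norm \<xi>"])
    fix g h :: "'a \<Rightarrow> complex" and c assume g: "g \<in> ell2" and h: "h \<in> ell2"
    show "rank_one \<xi> (\<lambda>x. g x + c * h x) = (\<lambda>x. rank_one \<xi> g x + c * rank_one \<xi> h x)"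
      using g h xi by (simp add: rank_one_def ell2_add_scaled l2inner_add_scaled_right algebra_simps)
  qed (use b in \<open>auto simp: rank_one_def\<close>)
  show "op_norm (rank_one \<xi>) \<le> l2norm \<xi> * l2norm \<xi>"
    using b by (intro op_norm_le) (auto simp: l2norm_nonneg)
qed

lemma op_norm_rank_one_diff_le:
  assumes xi: "\<xi> \<in> ell2" and ze: "\<zeta> \<in> ell2"
  shows "op_norm (op_diff (rank_one \<zeta>) (rank_one \<xi>)) \<le> (l2norm \<zeta> + l2norm \<xi>) * l2norm (\<lambda>x. \<zeta> x - \<xi> x)"
proof (rule op_norm_le)
  show "0 \<le> (l2norm \<zeta> + l2norm \<xi>) * l2norm (\<lambda>x. \<zeta> x - \<xi> x)" by (simp add: l2norm_nonneg)
next
  fix g :: "'a \<Rightarrow> complex" assume g: "g \<in> ell2"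
  define d where "d = (\<lambda>x. \<zeta> x - \<xi> x)"
  have d: "d \<in> ell2" unfolding d_def by (rule ell2_diff[OF ze xi])
  have "op_diff (rank_one \<zeta>) (rank_one \<xi>) g = (\<lambda>x. l2inner \<zeta> g * d x + l2inner d g * \<xi> x)"
  proof -
    have e: "l2inner (\<lambda>x. \<zeta> x - \<xi> x) g = l2inner \<zeta> g - l2inner \<xi> g"
      by (rule l2inner_diff_left[OF ze xi g])
    show ?thesis using g by (simp add: op_diff_def rank_one_def d_def e algebra_simps)
  qed
  then have "l2norm (op_diff (rank_one \<zeta>) (rank_one \<xi>) g)
      \<le> cmod (l2inner \<zeta> g) * l2norm d + cmod (l2inner d g) * l2norm \<xi>"
    using ell2_lincomb[OF d xi, of "l2inner \<zeta> g" "l2inner d g"] by simp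
  also have "\<dots> \<le> (l2norm \<zeta> * l2norm g) * l2norm d + (l2norm d * l2norm g) * l2norm \<xi>"
    by (intro add_mono mult_right_mono l2inner_cauchy_schwarz ze d g l2norm_nonneg)
  finally show "l2norm (op_diff (rank_one \<zeta>) (rank_one \<xi>) g)
      \<le> (l2norm \<zeta> + l2norm \<xi>) * l2norm (\<lambda>x. \<zeta> x - \<xi> x) * l2norm g"
    unfolding d_def by (simp add: algebra_simps)
qed

lemma rank_one_restrict_in_uniform_roe:
  assumes F: "finite F"
  shows "rank_one (\<lambda>x. if x \<in> F then \<xi> x else 0) \<in> uniform_roe"
proof -
  have e: "rank_one (\<lambda>x. if x \<in> F then \<xi> x else 0)
      = op_sum (F \<times> F) (\<lambda>(a,b). \<xi> a * cnj (\<xi> b)) (\<lambda>(a,b). pt_op {b} (\<lambda>_. a))"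
  proof
    fix g
    show "rank_one (\<lambda>x. if x \<in> F then \<xi> x else 0) g
        = op_sum (F \<times> F) (\<lambda>(a,b). \<xi> a * cnj (\<xi> b)) (\<lambda>(a,b). pt_op {b} (\<lambda>_. a)) g"
    proof (cases "g \<in> ell2")
      case False then show ?thesis by (simp add: rank_one_def op_sum_def pt_op_def split_def)
    next
      case g: True
      show ?thesis
      proof
        fix x
        have "op_sum (F \<times> F) (\<lambda>(a,b). \<xi> a * cnj (\<xi> b)) (\<lambda>(a,b). pt_op {b} (\<lambda>_. a)) g x
            = (\<Sum>(a,b)\<in>F \<times> F. \<xi> a * cnj (\<xi> b) * (if x = a then g b else 0))"
          unfolding op_sum_def using g by (simp add: split_def pt_op_const_singleton_apply)
        also have "\<dots> = (\<Sum>a\<in>F. \<Sum>b\<in>F. \<xi> a * cnj (\<xi> b) * (if x = a then g b else 0))"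
          by (rule sum.cartesian_product[symmetric])
        also have "\<dots> = (\<Sum>a\<in>F. if x = a then \<xi> a * (\<Sum>b\<in>F. cnj (\<xi> b) * g b) else 0)"
          by (rule sum.cong) (auto simp: sum_distrib_left algebra_simps)
        also have "\<dots> = (if x \<in> F then \<xi> x * (\<Sum>b\<in>F. cnj (\<xi> b) * g b) else 0)"
          using F by (simp add: sum.delta)
        also have "\<dots> = rank_one (\<lambda>x. if x \<in> F then \<xi> x else 0) g x"
          using g by (simp add: rank_one_def l2inner_restrict[OF F g] mult.commute)
        finally show "rank_one (\<lambda>x. if x \<in> F then \<xi> x else 0) g x
            = op_sum (F \<times> F) (\<lambda>(a,b). \<xi> a * cnj (\<xi> b)) (\<lambda>(a,b). pt_op {b} (\<lambda>_. a)) g x" ..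
      qed
    qed
  qed
  show ?thesis unfolding e
  proof (rule op_sum_in_cstar[OF cstar_subalg_uniform_roe])
    show "finite (F \<times> F)" using F by simp
    fix k :: "'a \<times> 'a"
    show "(case k of (a, b) \<Rightarrow> pt_op {b} (\<lambda>_. a)) \<in> uniform_roe"
      by (cases k) (simp add: pt_op_in_uniform_roe partial_translation_const_singleton)
  qed
qed

lemma rank_one_in_uniform_roe:
  assumes \<xi>: "\<xi> \<in> ell2"
  shows "rank_one \<xi> \<in> uniform_roe"
proof -
  define tail where "tail = (\<lambda>F. l2norm (\<lambda>x. \<xi> x - (if x \<in> F then \<xi> x else 0)))"
  have "\<forall>n. \<exists>F. finite F \<and> tail F < 1 / Suc n"
  proof
    fix n
    have "\<forall>\<^sub>F F in finite_subsets_at_top UNIV. tail F < 1 / Suc n"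
      using l2norm_diff_restrict_tendsto_0[OF \<xi>] unfolding tail_def by (rule order_tendstoD) simp
    then show "\<exists>F. finite F \<and> tail F < 1 / Suc n" unfolding eventually_finite_subsets_at_top by blast
  qed
  then obtain F where F: "\<And>n. finite (F n)" "\<And>n. tail (F n) < 1 / Suc n"
    using choice[of "\<lambda>n F. finite F \<and> tail F < 1 / Suc n"] by blast
  define s where "s = (\<lambda>n. rank_one (\<lambda>x. if x \<in> F n then \<xi> x else 0))"
  have s: "bounded_op (op_diff (s n) (rank_one \<xi>))" for n
    unfolding s_def by (intro bounded_op_diff rank_one_bounded ell2_restrict \<xi>)
  have le: "op_norm (op_diff (s n) (rank_one \<xi>)) \<le> 2 * l2norm \<xi> * (1 / Suc n)" for n
  proof -
    have r: "(\<lambda>x. if x \<in> F n then \<xi> x else 0) \<in> ell2" by (rule ell2_restrict[OF \<xi>])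
    have "op_norm (op_diff (s n) (rank_one \<xi>))
        \<le> (l2norm (\<lambda>x. if x \<in> F n then \<xi> x else 0) + l2norm \<xi>)
           * l2norm (\<lambda>x. (if x \<in> F n then \<xi> x else 0) - \<xi> x)"
      unfolding s_def by (rule op_norm_rank_one_diff_le[OF \<xi> r])
    also have "l2norm (\<lambda>x. (if x \<in> F n then \<xi> x else 0) - \<xi> x) = tail (F n)"
      unfolding tail_def by (rule l2norm_minus_sym)
    also have "(l2norm (\<lambda>x. if x \<in> F n then \<xi> x else 0) + l2norm \<xi>) * tail (F n)
        \<le> 2 * l2norm \<xi> * (1 / Suc n)"
      using l2norm_restrict_le[OF \<xi>, of "F n"] F(2)[of n]
      by (intro mult_mono) (auto simp: tail_def l2norm_nonneg)
    finally show ?thesis .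
  qed
  have "(\<lambda>n. 2 * l2norm \<xi> * (1 / Suc n)) \<longlonglongrightarrow> 2 * l2norm \<xi> * 0"
    by (intro tendsto_mult_left lim_1_over_n[THEN LIMSEQ_Suc])
  then have "(\<lambda>n. op_norm (op_diff (s n) (rank_one \<xi>))) \<longlonglongrightarrow> 0"
    using op_norm_tendsto_0_compare[OF s le] by simp
  moreover have "s n \<in> uniform_roe" for n
    unfolding s_def by (rule rank_one_restrict_in_uniform_roe[OF F(1)])
  ultimately show ?thesis
    by (intro cstar_limit[OF cstar_subalg_uniform_roe rank_one_bounded(1)[OF \<xi>]])
qed

definition reflection :: "('a \<Rightarrow> complex) \<Rightarrow> 'a op" where
  "reflection \<xi> = (\<lambda>g. if g \<in> ell2 then (\<lambda>x. g x - complex_of_real (2 / sq_l2norm \<xi>) * l2inner \<xi> g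
      * \<xi> x) else (\<lambda>_. 0))"

lemma reflection_eq_id_minus_rank_one:
  "reflection \<xi> = op_diff (pt_op UNIV id) (op_scale (complex_of_real (2 / sq_l2norm \<xi>)) (rank_one \<xi>))"
  by (auto simp: reflection_def op_diff_def op_scale_def rank_one_def pt_op_def fun_eq_iff)

lemma reflection_in_uniform_roe:
  "\<xi> \<in> ell2 \<Longrightarrow> reflection \<xi> \<in> uniform_roe"
  unfolding reflection_eq_id_minus_rank_one
  by (intro cstar_diff[OF cstar_subalg_uniform_roe] cstar_scale[OF cstar_subalg_uniform_roe]
      pt_op_in_uniform_roe partial_translation_id rank_one_in_uniform_roe)

lemma unitary_pair_reflection:
  assumes \<xi>: "\<xi> \<in> ell2" and pos: "sq_l2norm \<xi> > 0"
  shows "unitary_pair (reflection \<xi>) (reflection \<xi>)"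
proof -
  define k where "k = complex_of_real (2 / sq_l2norm \<xi>)"
  have kk: "k * complex_of_real (sq_l2norm \<xi>) = 2" unfolding k_def using pos
    by (simp flip: of_real_mult)
  have W: "reflection \<xi> g = (\<lambda>x. g x - k * l2inner \<xi> g * \<xi> x)" if "g \<in> ell2" for g
    using that by (simp add: reflection_def k_def)
  have Wg: "(\<lambda>x. g x - k * l2inner \<xi> g * \<xi> x) \<in> ell2" if "g \<in> ell2" for g
    using ell2_lincomb[OF that \<xi>, of 1 "- (k * l2inner \<xi> g)"] by (simp add: algebra_simps)
  have bounded: "bounded_op (reflection \<xi>)"
    unfolding reflection_eq_id_minus_rank_one
      by (intro bounded_op_diff bounded_op_scale bounded_pt_op rank_one_bounded \<xi>)
  have involution: "reflection \<xi> (reflection \<xi> g) = g" if g: "g \<in> ell2" for g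
  proof -
    have "l2inner \<xi> (\<lambda>x. g x - k * l2inner \<xi> g * \<xi> x) = l2inner \<xi> g - k * l2inner \<xi> g * l2inner \<xi> \<xi>"
      using l2inner_add_scaled_right[OF \<xi> g \<xi>, of "- (k * l2inner \<xi> g)"] by (simp add: algebra_simps)
    also have "\<dots> = - l2inner \<xi> g" using kk by (simp add: l2inner_self[OF \<xi>] algebra_simps)
    finally show ?thesis using W[OF g] W[OF Wg[OF g]] by simp
  qed
  have "is_adjoint (reflection \<xi>) (reflection \<xi>)"
    unfolding is_adjoint_def
  proof (intro ballI)
    fix g h :: "'a \<Rightarrow> complex" assume g: "g \<in> ell2" and h: "h \<in> ell2"
    have "l2inner (reflection \<xi> g) h = l2inner g h - cnj (k * l2inner \<xi> g) * l2inner \<xi> h"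
      using l2inner_add_scaled_left[OF g \<xi> h, of "- (k * l2inner \<xi> g)"] W[OF g]
        by (simp add: algebra_simps)
    also have "\<dots> = l2inner g h - k * l2inner g \<xi> * l2inner \<xi> h"
      using l2inner_cnj[OF \<xi> g] by (simp add: k_def)
    also have "\<dots> = l2inner g (reflection \<xi> h)"
      using l2inner_add_scaled_right[OF g h \<xi>, of "- (k * l2inner \<xi> h)"] W[OF h]
        by (simp add: algebra_simps)
    finally show "l2inner (reflection \<xi> g) h = l2inner g (reflection \<xi> h)" .
  qed
  then show ?thesis unfolding unitary_pair_def using bounded involution by blast
qed

lemma Ad_self_adjoint_pt_op_singleton_apply_delta:
  assumes W: "bounded_op W" and a: "is_adjoint W W"
  shows "Ad W W (pt_op {z} id) (delta v) y = cnj (W (delta z) v) * W (delta z) y"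
proof -
  have "W (delta v) z = l2inner (delta z) (W (delta v))" by (simp add: l2inner_delta_left)
  also have "\<dots> = l2inner (W (delta z)) (delta v)" using a unfolding is_adjoint_def by simp
  also have "\<dots> = cnj (W (delta z) v)" by (simp add: l2inner_delta_right)
  finally have "W (delta v) z = cnj (W (delta z) v)" .
  moreover have "Ad W W (pt_op {z} id) (delta v) = W (\<lambda>x. W (delta v) z * delta z x)"
    unfolding Ad_def using pt_op_singleton_id[OF bounded_op_ell2[OF W]] by simp
  moreover have "W (\<lambda>x. W (delta v) z * delta z x) = (\<lambda>x. W (delta v) z * W (delta z) x)"
    by (rule bounded_op_apply_scale[OF W ell2_delta])
  ultimately show ?thesis by simp
qed

lemma finite_cball_if_uniformly_locally_finite:
  assumes "uniformly_locally_finite TYPE('a::metric_space)"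
  shows "finite (cball (x :: 'a) r)"
proof -
  have "\<bar>r\<bar> + 1 > 0" by simp
  then have "finite (cball x (\<bar>r\<bar> + 1))"
    using assms unfolding uniformly_locally_finite_def by blast
  moreover have "cball x r \<subseteq> cball x (\<bar>r\<bar> + 1)" by (rule subset_cball) simp
  ultimately show ?thesis by (rule finite_subset[rotated])
qed

lemma exists_far_sequence:
  fixes x0 :: "'a::metric_space"
  assumes balls: "\<And>r. finite (cball x0 r)" and inf: "infinite (UNIV :: 'a set)"
  obtains p :: "nat \<Rightarrow> 'a" where "p 0 = x0" "inj p" "\<And>k. k \<ge> 1 \<Longrightarrow> 4 ^ k < dist (p k) x0"
proof -
  have far: "\<exists>y. r < dist y x0" for r
  proof -
    have "cball x0 r \<noteq> UNIV" using balls[of r] inf by auto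
    then obtain y where "y \<notin> cball x0 r" by blast
    then have "r < dist y x0" by (simp add: dist_commute not_le)
    then show ?thesis by blast
  qed
  define P where "P = (\<lambda>n x. if n = 0 then x = x0 else 4 ^ n < dist x x0)"
  have start: "\<exists>x. P 0 x" by (simp add: P_def)
  have step: "\<exists>y. P (Suc n) y \<and> dist x x0 < dist y x0" if "P n x" for x n
    using far[of "max (4 ^ Suc n) (dist x x0)"] by (auto simp: P_def)
  obtain p where p: "\<forall>n. P n (p n) \<and> dist (p n) x0 < dist (p (Suc n)) x0"
    using dependent_nat_choice[of P "\<lambda>n x y. dist x x0 < dist y x0", OF start step] by blast
  have "strict_mono (\<lambda>n. dist (p n) x0)" using p by (simp add: strict_mono_Suc_iff)
  then have "inj (\<lambda>n. dist (p n) x0)" by (rule strict_mono_imp_inj_on)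
  then have "inj p" unfolding inj_def by metis
  moreover have "p 0 = x0" using p by (simp add: P_def)
  moreover have "4 ^ k < dist (p k) x0" if "k \<ge> 1" for k using p that by (simp add: P_def)
  ultimately show ?thesis using that by blast
qed

lemma bornologous_floor_dist: "bornologous (\<lambda>x. \<lfloor>dist x x0\<rfloor>)"
  unfolding bornologous_def
proof (intro allI exI impI)
  fix R :: real and x y :: 'a assume d: "dist x y \<le> R"
  have t: "dist x x0 \<le> dist x y + dist y x0" "dist y x0 \<le> dist x y + dist x x0"
    by (rule dist_triangle) (metis dist_commute dist_triangle)
  have f: "of_int \<lfloor>dist x x0\<rfloor> \<le> dist x x0" "dist x x0 < of_int \<lfloor>dist x x0\<rfloor> + 1"
    "of_int \<lfloor>dist y x0\<rfloor> \<le> dist y x0" "dist y x0 < of_int \<lfloor>dist y x0\<rfloor> + 1"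
    by linarith+
  have "R \<le> of_int \<lceil>R\<rceil>" by (rule le_of_int_ceiling)
  then have "real_of_int \<bar>\<lfloor>dist x x0\<rfloor> - \<lfloor>dist y x0\<rfloor>\<bar> < of_int \<lceil>R\<rceil> + 1"
    using t f d by (simp add: abs_if) linarith
  then show "\<bar>\<lfloor>dist x x0\<rfloor> - \<lfloor>dist y x0\<rfloor>\<bar> \<le> \<lceil>R\<rceil> + 1" by linarith
qed

definition geometric_vector :: "(nat \<Rightarrow> 'a) \<Rightarrow> 'a \<Rightarrow> complex" where
  "geometric_vector p x = (if x \<in> range p then complex_of_real ((1/2) ^ inv p x) else 0)"

lemma geometric_vector_apply:
  "inj p \<Longrightarrow> geometric_vector p (p k) = complex_of_real ((1/2) ^ k)"
  unfolding geometric_vector_def by (simp add: inv_f_f)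

lemma has_sum_sq_geometric_vector:
  assumes p: "inj p"
  shows "((\<lambda>x. (cmod (geometric_vector p x))\<^sup>2) has_sum (4/3)) UNIV"
proof -
  have "((\<lambda>k::nat. (1/4::real) ^ k) has_sum (4/3)) UNIV"
    using sums_nonneg_imp_has_sum[OF geometric_sums[of "1/4::real"]] by simp
  moreover have "(cmod (geometric_vector p (p k)))\<^sup>2 = (1/4) ^ k" for k
  proof -
    have "((1/2::real) ^ k)\<^sup>2 = (1/4) ^ k"
      by (simp add: power2_eq_square power_mult_distrib[symmetric])
    then show ?thesis by (simp only: geometric_vector_apply[OF p] norm_of_real power2_abs)
  qed
  ultimately have "(((\<lambda>x. (cmod (geometric_vector p x))\<^sup>2) \<circ> p) has_sum (4/3)) UNIV"
    by (simp add: comp_def)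
  then have "((\<lambda>x. (cmod (geometric_vector p x))\<^sup>2) has_sum (4/3)) (range p)"
    using has_sum_reindex[OF inj_on_subset[OF p subset_UNIV]] by blast
  then show ?thesis
    by (rule has_sum_cong_neutral[THEN iffD1, rotated -1]) (auto simp: geometric_vector_def)
qed

lemma geometric_vector_ell2: "inj p \<Longrightarrow> geometric_vector p \<in> ell2"
  using has_sum_sq_geometric_vector unfolding ell2_def summable_on_def by blast

lemma sq_l2norm_geometric_vector: "inj p \<Longrightarrow> sq_l2norm (geometric_vector p) = 4/3"
  unfolding sq_l2norm_def by (rule infsumI[OF has_sum_sq_geometric_vector])

lemma reflection_geometric_vector_delta:
  assumes p: "inj p"
  shows "reflection (geometric_vector p) (delta (p 0)) y
           = delta (p 0) y - complex_of_real (3/2) * geometric_vector p y"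
proof -
  have "l2inner (geometric_vector p) (delta (p 0)) = 1"
    by (simp add: l2inner_delta_right geometric_vector_apply[OF p])
  then show ?thesis by (simp add: reflection_def sq_l2norm_geometric_vector[OF p])
qed

lemma norm_reflection_geometric_vector_delta:
  assumes p: "inj p" and k: "k \<ge> 1"
  shows "cmod (reflection (geometric_vector p) (delta (p 0)) (p k)) = (3/2) * (1/2) ^ k"
proof -
  have "p k \<noteq> p 0" using k inj_eq[OF p, of k 0] by simp
  then show ?thesis
    unfolding reflection_geometric_vector_delta[OF p]
    by (simp add: delta_def geometric_vector_apply[OF p] norm_mult norm_power norm_divide)
qed

lemma exists_pow4_minus_times_half_pow_gt:
  fixes C c :: real
  obtains k :: nat where "k \<ge> 1" "C < (4 ^ k - c) * (1/2) ^ k"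
proof -
  obtain n :: nat where n: "C + \<bar>c\<bar> < 2 ^ n" using real_arch_pow[of 2] by auto
  define q where "q = (1/2::real) ^ Suc n"
  have q: "0 \<le> q" "q \<le> 1"
    unfolding q_def by (simp, intro power_le_one) simp_all
  have "c * q \<le> \<bar>c\<bar> * q" by (rule mult_right_mono[OF abs_ge_self q(1)])
  also have "\<dots> \<le> \<bar>c\<bar>" by (rule mult_left_le[OF q(2) abs_ge_zero])
  finally have "c * q \<le> \<bar>c\<bar>" .
  moreover have "(2::real) ^ n \<le> 2 ^ Suc n" by simp
  moreover have "(4::real) ^ Suc n * q = 2 ^ Suc n" by (simp add: q_def flip: power_mult_distrib)
  ultimately have "C < (4 ^ Suc n - c) * q"
    using n unfolding left_diff_distrib by linarith
  then show ?thesis unfolding q_def by (rule that[of "Suc n", rotated]) simp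
qed

text \<open>The height \<open>\<lfloor>dist _ x0\<rfloor>\<close> grows like \<open>4^k\<close> along the sequence, while the matrix entries
  of \<open>W (pt_op {x0} id) W\<close> there only decay like \<open>2^-k\<close>.\<close>

lemma reflection_geometric_vector_entries_unbounded:
  fixes x0 :: "'a::metric_space"
  assumes p: "p 0 = x0" "inj p" "\<And>k. k \<ge> 1 \<Longrightarrow> 4 ^ k < dist (p k) x0"
  defines "W \<equiv> reflection (geometric_vector p)"
  shows "\<exists>v y. C < \<bar>real_of_int (\<lfloor>dist y x0\<rfloor> - \<lfloor>dist v x0\<rfloor>)\<bar> * cmod (Ad W W (pt_op {x0} id) (delta v) y)"
proof -
  have W: "bounded_op W" "is_adjoint W W"
    using unitary_pair_reflection[OF geometric_vector_ell2[OF p(2)]] sq_l2norm_geometric_vector[OF p(2)]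
    unfolding W_def unitary_pair_def by auto
  define c where "c = real_of_int \<lfloor>dist (p 1) x0\<rfloor>"
  obtain k :: nat where k: "k \<ge> 1" "(8/9) * C < (4 ^ k - c) * (1/2) ^ k"
    by (rule exists_pow4_minus_times_half_pow_gt)
  have "(4::int) ^ k \<le> \<lfloor>dist (p k) x0\<rfloor>"
    using p(3)[OF k(1)] unfolding le_floor_iff by simp
  then have "(4::real) ^ k \<le> of_int \<lfloor>dist (p k) x0\<rfloor>"
    by (metis of_int_le_iff of_int_numeral of_int_power)
  then have height: "4 ^ k - c \<le> \<bar>real_of_int (\<lfloor>dist (p k) x0\<rfloor> - \<lfloor>dist (p 1) x0\<rfloor>)\<bar>"
    unfolding c_def by linarith
  have "cmod (Ad W W (pt_op {x0} id) (delta (p 1)) (p k))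
      = cmod (W (delta x0) (p 1)) * cmod (W (delta x0) (p k))"
    by (simp add: Ad_self_adjoint_pt_op_singleton_apply_delta[OF W] norm_mult)
  also have "cmod (W (delta x0) (p 1)) = 3/4"
    using norm_reflection_geometric_vector_delta[OF p(2), of 1] unfolding W_def p(1)[symmetric] by simp
  also have "cmod (W (delta x0) (p k)) = (3/2) * (1/2) ^ k"
    using norm_reflection_geometric_vector_delta[OF p(2) k(1)] unfolding W_def p(1)[symmetric] .
  finally have entry: "cmod (Ad W W (pt_op {x0} id) (delta (p 1)) (p k)) = 3/4 * ((3/2) * (1/2) ^ k)" .
  have "C < 9/8 * ((4 ^ k - c) * (1/2) ^ k)" using k(2) by linarith
  also have "\<dots> \<le> 9/8 * (\<bar>real_of_int (\<lfloor>dist (p k) x0\<rfloor> - \<lfloor>dist (p 1) x0\<rfloor>)\<bar> * (1/2) ^ k)"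
    by (intro mult_left_mono mult_right_mono height) simp_all
  also have "\<dots> = \<bar>real_of_int (\<lfloor>dist (p k) x0\<rfloor> - \<lfloor>dist (p 1) x0\<rfloor>)\<bar>
                   * cmod (Ad W W (pt_op {x0} id) (delta (p 1)) (p k))"
    unfolding entry by simp
  finally show ?thesis by blast
qed

theorem proposition5p1p4:
  assumes "uniformly_locally_finite TYPE('a::metric_space)"
    and "infinite (UNIV :: 'a set)"
  shows "\<exists>\<sigma>. is_flow (uniform_roe :: 'a op set) \<sigma> \<and> \<not> coarse_flow (uniform_roe :: 'a op set) \<sigma>"
proof -
  obtain x0 :: 'a where True by blast
  obtain p where p: "p 0 = x0" "inj p" "\<And>k. k \<ge> 1 \<Longrightarrow> 4 ^ k < dist (p k) x0"
    using exists_far_sequence[OF finite_cball_if_uniformly_locally_finite[OF assms(1)] assms(2)] by blast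
  define W where "W = reflection (geometric_vector p)"
  define h where "h = (\<lambda>x. \<lfloor>dist x x0\<rfloor>)"
  have W: "W \<in> uniform_roe" "unitary_pair W W"
    unfolding W_def using p(2)
    by (simp_all add: reflection_in_uniform_roe unitary_pair_reflection geometric_vector_ell2
        sq_l2norm_geometric_vector)
  have "is_flow uniform_roe (\<lambda>t. Ad W W \<circ> phase_flow h t \<circ> Ad W W)"
    unfolding h_def
    by (rule is_flow_conj[OF cstar_subalg_uniform_roe W is_flow_phase_flow[OF bornologous_floor_dist]])
  moreover have "\<not> coarse_flow uniform_roe (\<lambda>t. Ad W W \<circ> phase_flow h t \<circ> Ad W W)"
  proof
    assume "coarse_flow uniform_roe (\<lambda>t. Ad W W \<circ> phase_flow h t \<circ> Ad W W)"
    then have "norm_differentiable_at (\<lambda>t. (Ad W W \<circ> phase_flow h t \<circ> Ad W W) (pt_op {x0} id)) 0"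
      unfolding coarse_flow_def using partial_translation_singleton_id by blast
    then obtain C where "\<And>v y. \<bar>real_of_int (h y - h v)\<bar> * cmod (Ad W W (pt_op {x0} id) (delta v) y) \<le> C"
      by (rule conj_phase_flow_differentiable_entry_bound[OF W(2) bounded_pt_op]) blast
    then show False
      using reflection_geometric_vector_entries_unbounded[OF p, of C] unfolding W_def h_def
        by (meson not_less)
  qed
  ultimately show ?thesis by blast
qed

end
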